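(* Let $t\ge 2$, $q\ge 1$ and $s_1,\dots,s_t\ge 3$ be integers, let $G=K_1\vee(C_{s_1}\cup\cdots\cup C_{s_t}\cup qK_2)$ have $n$ vertices, and let $H$ be a simple graph with the same $Q$-spectrum as $G$. If $n\ge 52$ or $q\ge 12$, then the maximum degree of $H$ equals the maximum degree of $G$, namely $n-1$.
   Context: Graphs are simple. $K_1\vee H$ adds one vertex adjacent to every vertex of $H$; $\cup$ is disjoint union; $qK_2$ is $q$ disjoint edges; $C_s$ is the cycle on $s$ vertices. The $Q$-spectrum is the multiset of eigenvalues of $Q=A+D$ (adjacency matrix plus diagonal degree matrix). *)

theory Defs
  imports "HOL-Computational_Algebra.Computational_Algebra" "Jordan_Normal_Form.Char_Poly"
begin

definition simple_graph :: "nat \<Rightarrow> (nat \<Rightarrow> nat \<Rightarrow> bool) \<Rightarrow> bool" where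
  "simple_graph n E \<longleftrightarrow> (\<forall>i j. E i j \<longrightarrow> i < n \<and> j < n) \<and> (\<forall>i j. E i j \<longrightarrow> E j i) \<and> (\<forall>i. \<not> E i i)"

definition deg :: "nat \<Rightarrow> (nat \<Rightarrow> nat \<Rightarrow> bool) \<Rightarrow> nat \<Rightarrow> nat" where
  "deg n E i = card {j. j < n \<and> E i j}"

definition max_deg :: "nat \<Rightarrow> (nat \<Rightarrow> nat \<Rightarrow> bool) \<Rightarrow> nat" where
  "max_deg n E = Max (deg n E ` {0..<n})"

definition Q_matrix :: "nat \<Rightarrow> (nat \<Rightarrow> nat \<Rightarrow> bool) \<Rightarrow> complex mat" where
  "Q_matrix n E = mat n n (\<lambda>(i, j). (if E i j then 1 else 0) + (if i = j then of_nat (deg n E i) else 0))"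

definition Q_spectrum :: "nat \<Rightarrow> (nat \<Rightarrow> nat \<Rightarrow> bool) \<Rightarrow> complex multiset" where
  "Q_spectrum n E = proots (char_poly (Q_matrix n E))"

text \<open>Disjoint union of cycles C_{s_1},...,C_{s_t} on {0..<sum s}: cycle k occupies the
  consecutive block starting at offset sum (take k s).\<close>
definition cycles_adj :: "nat list \<Rightarrow> nat \<Rightarrow> nat \<Rightarrow> bool" where
  "cycles_adj s u v \<longleftrightarrow> (\<exists>k < length s. let off = sum_list (take k s); c = s ! k in
      off \<le> u \<and> u < off + c \<and> off \<le> v \<and> v < off + c \<and>
      (v - off = (u - off + 1) mod c \<or> u - off = (v - off + 1) mod c))"

text \<open>q K_2 placed on {a..<a+2q}: vertices a+2j and a+2j+1 adjacent.\<close>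
definition matching_adj :: "nat \<Rightarrow> nat \<Rightarrow> nat \<Rightarrow> nat \<Rightarrow> bool" where
  "matching_adj a q u v \<longleftrightarrow> a \<le> u \<and> u < a + 2 * q \<and> a \<le> v \<and> v < a + 2 * q \<and> u \<noteq> v \<and>
      (u - a) div 2 = (v - a) div 2"

definition G_order :: "nat list \<Rightarrow> nat \<Rightarrow> nat" where
  "G_order s q = 1 + sum_list s + 2 * q"

text \<open>K_1 \<or> (C_{s_1} \<union> ... \<union> C_{s_t} \<union> q K_2): vertex 0 is the cone vertex, vertex i+1
  corresponds to vertex i of the disjoint union.\<close>
definition G_adj :: "nat list \<Rightarrow> nat \<Rightarrow> nat \<Rightarrow> nat \<Rightarrow> bool" where
  "G_adj s q i j \<longleftrightarrow> i < G_order s q \<and> j < G_order s q \<and> i \<noteq> j \<and>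
     (i = 0 \<or> j = 0 \<or> cycles_adj s (i - 1) (j - 1) \<or> matching_adj (sum_list s) q (i - 1) (j - 1))"

end

(*
  Every vertex of G other than the cone vertex 0 has degree at most 3, so on the hyperplane
  x_0 = 0 the quadratic form of Q_G is at most 5 |x|^2.  By Courant-Fischer, Q_G and hence the
  cospectral Q_H have at most one eigenvalue above 5.  Two vertices of degree at least 7 in H
  would span a plane on which the form of Q_H exceeds 5 |x|^2, so all vertices of H but one,
  say p, have degree at most 6.  The test vector (n - 1, 1, ..., 1) shows that Q_G, and hence
  Q_H, has an eigenvalue theta >= n.  Comparing the entry at p of a theta-eigenvector of Q_H with
  its largest entry elsewhere forces theta < d_p + 2, hence d_p = n - 1.
*)
theory Submission
  imports Defs "Jordan_Normal_Form.Spectral_Radius"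
begin

section \<open>Inner products and Hermitian matrices\<close>

lemma cscalar_prod_sum:
  fixes x y :: "complex vec"
  assumes "x \<in> carrier_vec n" "y \<in> carrier_vec n"
  shows "x \<bullet>c y = (\<Sum>a<n. x $ a * cnj (y $ a))"
  using assms unfolding scalar_prod_def by (simp add: atLeast0LessThan)

lemma cscalar_prod_commute:
  fixes x y :: "complex vec"
  assumes "x \<in> carrier_vec n" "y \<in> carrier_vec n"
  shows "x \<bullet>c y = cnj (y \<bullet>c x)"
  using assms by (simp add: cscalar_prod_sum[of _ n] cnj_sum mult.commute)

lemma cscalar_prod_smult:
  fixes v w :: "complex vec"
  assumes "v \<in> carrier_vec n" "w \<in> carrier_vec n"
  shows "(a \<cdot>\<^sub>v v) \<bullet>c w = a * (v \<bullet>c w)" "v \<bullet>c (a \<cdot>\<^sub>v w) = cnj a * (v \<bullet>c w)"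
  using assms by (simp_all add: conjugate_smult_vec)

lemma cscalar_prod_add:
  fixes u v w :: "complex vec"
  assumes "u \<in> carrier_vec n" "v \<in> carrier_vec n" "w \<in> carrier_vec n"
  shows "(u + v) \<bullet>c w = u \<bullet>c w + v \<bullet>c w"
  using assms by (simp add: add_scalar_prod_distrib[of _ n])

lemma Re_cscalar_prod_self:
  fixes x :: "complex vec"
  assumes "x \<in> carrier_vec n"
  shows "Re (x \<bullet>c x) = (\<Sum>a<n. (cmod (x $ a))\<^sup>2)"
  using assms by (simp add: cscalar_prod_sum[of _ n] Re_sum flip: complex_norm_square)

lemma cscalar_prod_self_real:
  fixes x :: "complex vec"
  shows "x \<bullet>c x = complex_of_real (Re (x \<bullet>c x))"
proof -
  have "x \<bullet>c x \<ge> 0" by auto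
  then show ?thesis by (simp add: complex_eq_iff less_eq_complex_def)
qed

lemma Re_cscalar_prod_self_pos:
  fixes x :: "complex vec"
  assumes "x \<in> carrier_vec n" "x \<noteq> 0\<^sub>v n"
  shows "Re (x \<bullet>c x) > 0"
proof -
  have "x \<bullet>c x > 0" using assms by simp
  then show ?thesis by (simp add: less_complex_def)
qed

lemma cscalar_prod_unit_vec:
  fixes x :: "complex vec"
  assumes "x \<in> carrier_vec n" "i < n"
  shows "x \<bullet>c unit_vec n i = x $ i"
proof -
  have "conjugate (unit_vec n i) = (unit_vec n i :: complex vec)"
    by (intro eq_vecI) (auto simp: unit_vec_def)
  then show ?thesis using assms by (simp add: scalar_prod_right_unit)
qed

lemma mat_adjoint_carrier [simp]: "A \<in> carrier_mat n m \<Longrightarrow> mat_adjoint A \<in> carrier_mat m n"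
  unfolding mat_adjoint_def by auto

lemma mat_adjoint_index [simp]:
  "i < dim_col A \<Longrightarrow> j < dim_row A \<Longrightarrow> mat_adjoint A $$ (i, j) = cnj (A $$ (j, i))"
  unfolding mat_adjoint_def by (simp add: mat_of_rows_index)

lemma mat_adjoint_dim [simp]:
  "dim_row (mat_adjoint A) = dim_col A" "dim_col (mat_adjoint A) = dim_row A"
  unfolding mat_adjoint_def by auto

lemma row_mat_adjoint:
  fixes A :: "complex mat"
  shows "i < dim_col A \<Longrightarrow> row (mat_adjoint A) i = conjugate (col A i)"
  by (intro eq_vecI) auto

lemma mult_mat_vec_cscalar_prod:
  fixes A :: "complex mat"
  assumes A: "A \<in> carrier_mat n m" and x: "x \<in> carrier_vec m" and y: "y \<in> carrier_vec n"
  shows "(A *\<^sub>v x) \<bullet>c y = x \<bullet>c (mat_adjoint A *\<^sub>v y)"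
proof -
  have adj: "(mat_adjoint A *\<^sub>v y) $ j = (\<Sum>i<n. cnj (A $$ (i, j)) * y $ i)" if "j < m" for j
    using A y that by (auto simp: scalar_prod_def atLeast0LessThan intro!: sum.cong)
  have "(A *\<^sub>v x) \<bullet>c y = (\<Sum>i<n. (\<Sum>j<m. A $$ (i, j) * x $ j) * cnj (y $ i))"
    using A x y by (simp add: cscalar_prod_sum[of _ n] scalar_prod_def atLeast0LessThan)
  also have "\<dots> = (\<Sum>i<n. \<Sum>j<m. x $ j * (A $$ (i, j) * cnj (y $ i)))"
    by (simp add: sum_distrib_left sum_distrib_right mult_ac)
  also have "\<dots> = (\<Sum>j<m. \<Sum>i<n. x $ j * (A $$ (i, j) * cnj (y $ i)))"
    by (rule sum.swap)
  also have "\<dots> = (\<Sum>j<m. x $ j * cnj ((mat_adjoint A *\<^sub>v y) $ j))"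
    by (intro sum.cong refl) (simp add: adj sum_distrib_left mult_ac)
  also have "\<dots> = x \<bullet>c (mat_adjoint A *\<^sub>v y)"
    using A x y mult_mat_vec_carrier[OF mat_adjoint_carrier[OF A] y]
    by (subst cscalar_prod_sum[of _ m]) auto
  finally show ?thesis .
qed

definition hermitian :: "complex mat \<Rightarrow> bool" where
  "hermitian A \<longleftrightarrow> mat_adjoint A = A"

lemma hermitianI:
  assumes "A \<in> carrier_mat n n" and "\<And>i j. i < n \<Longrightarrow> j < n \<Longrightarrow> A $$ (i, j) = cnj (A $$ (j, i))"
  shows "hermitian A"
  unfolding hermitian_def
proof (rule eq_matI)
  fix i j assume "i < dim_row A" "j < dim_col A"
  then show "mat_adjoint A $$ (i, j) = A $$ (i, j)" using assms(1) assms(2)[of j i] by simp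
qed (use assms(1) in auto)

lemma hermitian_cscalar_prod:
  fixes A :: "complex mat"
  assumes "A \<in> carrier_mat n n" "hermitian A" "x \<in> carrier_vec n" "y \<in> carrier_vec n"
  shows "(A *\<^sub>v x) \<bullet>c y = x \<bullet>c (A *\<^sub>v y)"
  using mult_mat_vec_cscalar_prod[OF assms(1,3,4)] assms(2) unfolding hermitian_def by simp

lemma hermitian_unit_eigenvector:
  fixes A :: "complex mat"
  assumes A: "A \<in> carrier_mat n n" and h: "hermitian A" and n: "0 < n"
  obtains v r where "v \<in> carrier_vec n" "v \<bullet>c v = 1" "A *\<^sub>v v = complex_of_real r \<cdot>\<^sub>v v"
proof -
  obtain e where "eigenvalue A e" using spectrum_non_empty[OF A n] unfolding spectrum_def by auto
  then obtain w where w: "w \<in> carrier_vec n" "w \<noteq> 0\<^sub>v n" and Aw: "A *\<^sub>v w = e \<cdot>\<^sub>v w"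
    using A unfolding eigenvalue_def eigenvector_def by auto
  define c where "c = Re (w \<bullet>c w)"
  have c: "0 < c" "w \<bullet>c w = complex_of_real c"
    unfolding c_def using Re_cscalar_prod_self_pos[OF w] cscalar_prod_self_real[of w] by auto
  have "e * (w \<bullet>c w) = cnj e * (w \<bullet>c w)"
    using hermitian_cscalar_prod[OF A h w(1) w(1)] w(1) by (simp add: Aw cscalar_prod_smult[of _ n])
  then have e: "e = complex_of_real (Re e)"
    using c by (simp add: complex_eq_iff)
  have Aw': "A *\<^sub>v w = complex_of_real (Re e) \<cdot>\<^sub>v w" using Aw e by metis
  define v where "v = complex_of_real (1 / sqrt c) \<cdot>\<^sub>v w"
  show thesis
  proof
    show "v \<in> carrier_vec n" unfolding v_def using w by simp
    show "v \<bullet>c v = 1"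
      unfolding v_def using w c by (simp add: cscalar_prod_smult[of _ n] flip: of_real_mult)
    show "A *\<^sub>v v = complex_of_real (Re e) \<cdot>\<^sub>v v"
      unfolding v_def using A w by (simp add: mult_mat_vec Aw' smult_smult_assoc mult.commute)
  qed
qed

section \<open>The spectral theorem\<close>

definition orthonormal :: "nat \<Rightarrow> complex vec list \<Rightarrow> bool" where
  "orthonormal n us \<longleftrightarrow> length us = n \<and> set us \<subseteq> carrier_vec n \<and>
     (\<forall>i<n. \<forall>j<n. us ! i \<bullet>c us ! j = (if i = j then 1 else 0))"

lemma orthonormalD:
  assumes "orthonormal n us"
  shows "length us = n" "\<And>i. i < n \<Longrightarrow> us ! i \<in> carrier_vec n"
    "\<And>i j. i < n \<Longrightarrow> j < n \<Longrightarrow> us ! i \<bullet>c us ! j = (if i = j then 1 else 0)"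
  using assms unfolding orthonormal_def by auto

lemma orthonormal_mat_of_cols_carrier:
  "orthonormal n us \<Longrightarrow> mat_of_cols n us \<in> carrier_mat n n"
  using orthonormalD(1) by auto

lemma orthonormal_adjoint_mult:
  assumes us: "orthonormal n us"
  shows "mat_adjoint (mat_of_cols n us) * mat_of_cols n us = 1\<^sub>m n"
proof (rule eq_matI)
  fix i j assume "i < dim_row (1\<^sub>m n)" "j < dim_col (1\<^sub>m n)"
  then have ij: "i < n" "j < n" by auto
  then have "(mat_adjoint (mat_of_cols n us) * mat_of_cols n us) $$ (i, j)
      = conjugate (us ! i) \<bullet> us ! j"
    using orthonormalD(1,2)[OF us] by (simp add: row_mat_adjoint)
  also have "\<dots> = us ! j \<bullet>c us ! i"
    using ij orthonormalD(2)[OF us] by (simp add: conjugate_vec_sprod_comm[of _ n])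
  finally show "(mat_adjoint (mat_of_cols n us) * mat_of_cols n us) $$ (i, j) = 1\<^sub>m n $$ (i, j)"
    using ij orthonormalD(3)[OF us] by auto
qed (use orthonormalD(1)[OF us] in auto)

lemma orthonormal_mult_adjoint:
  assumes "orthonormal n us"
  shows "mat_of_cols n us * mat_adjoint (mat_of_cols n us) = 1\<^sub>m n"
  using orthonormal_mat_of_cols_carrier[OF assms]
  by (intro mat_mult_left_right_inverse[OF mat_adjoint_carrier _ orthonormal_adjoint_mult[OF assms]])

lemma orthonormal_mult_mat_vec_cscalar_prod:
  assumes us: "orthonormal n us" and x: "x \<in> carrier_vec n" and y: "y \<in> carrier_vec n"
  shows "(mat_of_cols n us *\<^sub>v x) \<bullet>c (mat_of_cols n us *\<^sub>v y) = x \<bullet>c y"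
proof -
  let ?U = "mat_of_cols n us"
  have U: "?U \<in> carrier_mat n n" by (rule orthonormal_mat_of_cols_carrier[OF us])
  have "(?U *\<^sub>v x) \<bullet>c (?U *\<^sub>v y) = x \<bullet>c (mat_adjoint ?U *\<^sub>v (?U *\<^sub>v y))"
    using U x y by (intro mult_mat_vec_cscalar_prod) auto
  also have "mat_adjoint ?U *\<^sub>v (?U *\<^sub>v y) = y"
    using U y by (simp add: assoc_mult_mat_vec[symmetric, of _ n n _ n] orthonormal_adjoint_mult[OF us])
  finally show ?thesis .
qed

lemma orthonormal_parseval:
  assumes us: "orthonormal n us" and y: "y \<in> carrier_vec n" and z: "z \<in> carrier_vec n"
  shows "y \<bullet>c z = (\<Sum>k<n. (y \<bullet>c us ! k) * cnj (z \<bullet>c us ! k))"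
proof -
  let ?U = "mat_of_cols n us" and ?V = "mat_adjoint (mat_of_cols n us)"
  have U: "?U \<in> carrier_mat n n" and V: "?V \<in> carrier_mat n n"
    using orthonormal_mat_of_cols_carrier[OF us] by auto
  have expand: "x = ?U *\<^sub>v (?V *\<^sub>v x)" if "x \<in> carrier_vec n" for x
    using U V that by (simp add: assoc_mult_mat_vec[symmetric, of _ n n _ n] orthonormal_mult_adjoint[OF us])
  have coord: "(?V *\<^sub>v x) $ k = x \<bullet>c us ! k" if x: "x \<in> carrier_vec n" and k: "k < n" for x k
  proof -
    have "(?V *\<^sub>v x) $ k = conjugate (us ! k) \<bullet> x"
      using k orthonormalD[OF us] by (simp add: row_mat_adjoint)
    also have "\<dots> = x \<bullet>c us ! k"
      using x k orthonormalD(2)[OF us] by (simp add: conjugate_vec_sprod_comm[of _ n])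
    finally show ?thesis .
  qed
  have "y \<bullet>c z = (?V *\<^sub>v y) \<bullet>c (?V *\<^sub>v z)"
    using expand[OF y] expand[OF z] orthonormal_mult_mat_vec_cscalar_prod[OF us] V y z
    by (metis mult_mat_vec_carrier)
  also have "\<dots> = (\<Sum>k<n. (y \<bullet>c us ! k) * cnj (z \<bullet>c us ! k))"
    using V y z by (simp add: cscalar_prod_sum[of _ n] coord)
  finally show ?thesis .
qed

lemma orthonormal_extension:
  assumes v: "v \<in> carrier_vec n" "v \<bullet>c v = 1"
  obtains ws where "orthonormal n ws" "ws ! 0 = v"
proof -
  have v0: "v \<noteq> 0\<^sub>v n" using v by auto
  then have n: "0 < n" using v(1) by (cases n) auto
  interpret cof_vec_space n "TYPE(complex)" .
  define bs where "bs = basis_completion v"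
  have bs: "set bs \<subseteq> carrier_vec n" "distinct bs" "\<not> lin_dep (set bs)" "length bs = n" "hd bs = v"
    using basis_completion[OF v(1) v0] unfolding bs_def by auto
  then obtain vs where bsv: "bs = v # vs" using n by (cases bs) auto
  define gs where "gs = gram_schmidt n bs"
  have gs: "set gs \<subseteq> carrier_vec n" "corthogonal gs" "length gs = n"
    using gram_schmidt_result[OF bs(1-3) gs_def] bs(4) by auto
  have gs0: "gs ! 0 = v"
    using gram_schmidt_hd[OF v(1), of vs] gs(3) bs(4) unfolding gs_def bsv
    by (cases "gram_schmidt n (v # vs)") auto
  define c where "c = (\<lambda>w. 1 / sqrt (Re (w \<bullet>c w)))"
  define ws where "ws = map (\<lambda>w. complex_of_real (c w) \<cdot>\<^sub>v w) gs"
  show thesis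
  proof
    show "orthonormal n ws" unfolding orthonormal_def
    proof (intro conjI allI impI)
      show "length ws = n" "set ws \<subseteq> carrier_vec n" using gs unfolding ws_def by auto
      fix i j assume ij: "i < n" "j < n"
      have g: "gs ! i \<in> carrier_vec n" "gs ! j \<in> carrier_vec n" using ij gs by auto
      have "ws ! i \<bullet>c ws ! j = complex_of_real (c (gs ! i) * c (gs ! j)) * (gs ! i \<bullet>c gs ! j)"
        using ij g gs(3) unfolding ws_def by (simp add: cscalar_prod_smult[of _ n])
      moreover have "(gs ! i \<bullet>c gs ! j = 0) = (i \<noteq> j)" using corthogonalD[OF gs(2)] ij gs(3) by auto
      moreover have "complex_of_real (c (gs ! i) * c (gs ! i)) * (gs ! i \<bullet>c gs ! i) = 1"
        if "gs ! i \<bullet>c gs ! i \<noteq> 0"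
      proof -
        obtain r where r: "gs ! i \<bullet>c gs ! i = complex_of_real r"
          using cscalar_prod_self_real by blast
        have "gs ! i \<noteq> 0\<^sub>v n" using that by auto
        then have "0 < r" using Re_cscalar_prod_self_pos[OF g(1)] r by simp
        then show ?thesis unfolding c_def r by (simp flip: of_real_mult)
      qed
      ultimately show "ws ! i \<bullet>c ws ! j = (if i = j then 1 else 0)" by auto
    qed
    show "ws ! 0 = v" using gs0 v(2) gs(3) bs(4) v0 unfolding ws_def c_def by (cases n) auto
  qed
qed

definition eigenbasis :: "nat \<Rightarrow> complex mat \<Rightarrow> complex vec list \<Rightarrow> real list \<Rightarrow> bool" where
  "eigenbasis n A us es \<longleftrightarrow> orthonormal n us \<and> length es = n \<and>
     (\<forall>k<n. A *\<^sub>v us ! k = complex_of_real (es ! k) \<cdot>\<^sub>v us ! k)"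

lemma eigenbasis_unitary_similar:
  assumes A: "A \<in> carrier_mat n n" and ws: "orthonormal n ws"
    and B: "eigenbasis n (mat_adjoint (mat_of_cols n ws) * A * mat_of_cols n ws) xs es"
  shows "eigenbasis n A (map (\<lambda>x. mat_of_cols n ws *\<^sub>v x) xs) es"
proof -
  let ?W = "mat_of_cols n ws"
  let ?B = "mat_adjoint ?W * A * ?W"
  have W: "?W \<in> carrier_mat n n" by (rule orthonormal_mat_of_cols_carrier[OF ws])
  have V: "mat_adjoint ?W \<in> carrier_mat n n" using W by simp
  have ortho: "orthonormal n xs" and es: "length es = n"
    and ev: "\<And>k. k < n \<Longrightarrow> ?B *\<^sub>v xs ! k = complex_of_real (es ! k) \<cdot>\<^sub>v xs ! k"
    using B unfolding eigenbasis_def by auto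
  note xs = orthonormalD[OF ortho]
  have "?W * ?B = ?W * (mat_adjoint ?W * (A * ?W))" by (simp add: assoc_mult_mat[OF V A W])
  also have "\<dots> = (?W * mat_adjoint ?W) * (A * ?W)"
    by (rule assoc_mult_mat[OF W V mult_carrier_mat[OF A W], symmetric])
  also have "\<dots> = A * ?W" using A W by (simp add: orthonormal_mult_adjoint[OF ws])
  finally have AW: "A * ?W = ?W * ?B" ..
  have "A *\<^sub>v (?W *\<^sub>v xs ! k) = complex_of_real (es ! k) \<cdot>\<^sub>v (?W *\<^sub>v xs ! k)" if "k < n" for k
  proof -
    have "A *\<^sub>v (?W *\<^sub>v xs ! k) = (?W * ?B) *\<^sub>v xs ! k"
      using A W xs(2)[OF that] by (simp add: AW[symmetric])
    also have "\<dots> = ?W *\<^sub>v (?B *\<^sub>v xs ! k)"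
      by (rule assoc_mult_mat_vec[OF W mult_carrier_mat[OF mult_carrier_mat[OF V A] W] xs(2)[OF that]])
    also have "\<dots> = ?W *\<^sub>v (complex_of_real (es ! k) \<cdot>\<^sub>v xs ! k)"
      by (simp add: ev[OF that])
    finally show ?thesis using W xs(2)[OF that] by (simp add: mult_mat_vec)
  qed
  moreover have "orthonormal n (map (\<lambda>x. ?W *\<^sub>v x) xs)"
    using B W xs unfolding eigenbasis_def orthonormal_def
    by (auto simp: orthonormal_mult_mat_vec_cscalar_prod[OF ws] in_set_conv_nth)
  ultimately show ?thesis using xs es unfolding eigenbasis_def by simp
qed

lemma mult_mat_vec_index_sum:
  fixes A :: "complex mat"
  assumes "A \<in> carrier_mat n m" "v \<in> carrier_vec m" "i < n"
  shows "(A *\<^sub>v v) $ i = (\<Sum>j<m. A $$ (i, j) * v $ j)"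
  using assms by (simp add: scalar_prod_def atLeast0LessThan)

lemma mult_mat_vec_vCons:
  fixes B :: "complex mat"
  assumes B: "B \<in> carrier_mat (Suc k) (Suc k)" and u: "u \<in> carrier_vec k" and i: "i < Suc k"
  shows "(B *\<^sub>v vCons a u) $ i = B $$ (i, 0) * a + (\<Sum>j<k. B $$ (i, Suc j) * u $ j)"
proof -
  have "(B *\<^sub>v vCons a u) $ i = (\<Sum>j<Suc k. B $$ (i, j) * vCons a u $ j)"
    by (rule mult_mat_vec_index_sum[OF B _ i]) (simp add: u)
  also have "\<dots> = B $$ (i, 0) * a + (\<Sum>j<k. B $$ (i, Suc j) * u $ j)"
    by (subst sum.lessThan_Suc_shift) simp
  finally show ?thesis .
qed

lemma eigenbasis_block:
  assumes B: "B \<in> carrier_mat (Suc k) (Suc k)"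
    and col: "\<And>i. i < Suc k \<Longrightarrow> B $$ (i, 0) = (if i = 0 then complex_of_real r else 0)"
    and row: "\<And>j. j < Suc k \<Longrightarrow> B $$ (0, j) = (if j = 0 then complex_of_real r else 0)"
    and C: "eigenbasis k (mat k k (\<lambda>(i, j). B $$ (Suc i, Suc j))) us es"
  shows "eigenbasis (Suc k) B (vCons 1 (0\<^sub>v k) # map (vCons 0) us) (r # es)"
proof -
  let ?C = "mat k k (\<lambda>(i, j). B $$ (Suc i, Suc j))"
  have ortho: "orthonormal k us" and es: "length es = k"
    and ev: "\<And>i. i < k \<Longrightarrow> ?C *\<^sub>v us ! i = complex_of_real (es ! i) \<cdot>\<^sub>v us ! i"
    using C unfolding eigenbasis_def by auto
  note us = orthonormalD[OF ortho]
  have Bv: "B *\<^sub>v vCons a u = vCons (complex_of_real r * a) (?C *\<^sub>v u)" if "u \<in> carrier_vec k" for a u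
  proof (rule eq_vecI)
    fix i assume "i < dim_vec (vCons (complex_of_real r * a) (?C *\<^sub>v u))"
    then have i: "i < Suc k" by simp
    have Bi: "(B *\<^sub>v vCons a u) $ i = B $$ (i, 0) * a + (\<Sum>j<k. B $$ (i, Suc j) * u $ j)"
      by (rule mult_mat_vec_vCons[OF B that i])
    show "(B *\<^sub>v vCons a u) $ i = vCons (complex_of_real r * a) (?C *\<^sub>v u) $ i"
    proof (cases i)
      case 0
      have "(\<Sum>j<k. B $$ (0, Suc j) * u $ j) = 0" using row by (intro sum.neutral) simp
      then show ?thesis using Bi row[of 0] 0 by simp
    next
      case (Suc i')
      then have "(?C *\<^sub>v u) $ i' = (\<Sum>j<k. B $$ (i, Suc j) * u $ j)"
        using i that by (subst mult_mat_vec_index_sum[of _ k k]) auto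
      then show ?thesis using Bi col[OF i] Suc by simp
    qed
  qed (use B in simp)
  have "orthonormal (Suc k) (vCons 1 (0\<^sub>v k) # map (vCons 0) us)"
    unfolding orthonormal_def
  proof (intro conjI allI impI)
    show "length (vCons 1 (0\<^sub>v k) # map (vCons 0) us) = Suc k" using us by simp
    show "set (vCons 1 (0\<^sub>v k) # map (vCons 0) us) \<subseteq> carrier_vec (Suc k)"
      using us by (auto simp: in_set_conv_nth)
    fix i j assume "i < Suc k" "j < Suc k"
    then show "(vCons 1 (0\<^sub>v k) # map (vCons 0) us) ! i \<bullet>c (vCons 1 (0\<^sub>v k) # map (vCons 0) us) ! j
        = (if i = j then 1 else 0)"
      using us by (cases i; cases j) auto
  qed
  moreover have "B *\<^sub>v (vCons 1 (0\<^sub>v k) # map (vCons 0) us) ! i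
      = complex_of_real ((r # es) ! i) \<cdot>\<^sub>v (vCons 1 (0\<^sub>v k) # map (vCons 0) us) ! i"
    if "i < Suc k" for i
    using that us ev by (cases i) (auto simp: Bv intro!: eq_vecI simp: vec_index_vCons)
  ultimately show ?thesis using es unfolding eigenbasis_def by simp
qed

lemma mult_adjoint_index:
  fixes A :: "complex mat"
  assumes ws: "orthonormal n ws" and A: "A \<in> carrier_mat n n" and ij: "i < n" "j < n"
  shows "(mat_adjoint (mat_of_cols n ws) * A * mat_of_cols n ws) $$ (i, j) = (A *\<^sub>v ws ! j) \<bullet>c ws ! i"
proof -
  let ?W = "mat_of_cols n ws"
  have W: "?W \<in> carrier_mat n n" by (rule orthonormal_mat_of_cols_carrier[OF ws])
  have w: "ws ! i \<in> carrier_vec n" "ws ! j \<in> carrier_vec n" using orthonormalD(2)[OF ws] ij by auto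
  have "(mat_adjoint ?W * A * ?W) $$ (i, j) = (mat_adjoint ?W * (A * ?W)) $$ (i, j)"
    using W A by (simp add: assoc_mult_mat[of _ n n _ n _ n])
  also have "\<dots> = conjugate (ws ! i) \<bullet> (A *\<^sub>v ws ! j)"
    using W A ij w orthonormalD(1)[OF ws] by (simp add: row_mat_adjoint mult_mat_vec_def)
  also have "\<dots> = (A *\<^sub>v ws ! j) \<bullet>c ws ! i"
    using A w by (simp add: conjugate_vec_sprod_comm[of _ n])
  finally show ?thesis .
qed

lemma hermitian_deflation:
  fixes A :: "complex mat"
  assumes A: "A \<in> carrier_mat (Suc k) (Suc k)" and h: "hermitian A"
    and ws: "orthonormal (Suc k) ws" and ev: "A *\<^sub>v ws ! 0 = complex_of_real r \<cdot>\<^sub>v ws ! 0"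
  defines "B \<equiv> mat_adjoint (mat_of_cols (Suc k) ws) * A * mat_of_cols (Suc k) ws"
  shows "B \<in> carrier_mat (Suc k) (Suc k)"
    and "\<And>i. i < Suc k \<Longrightarrow> B $$ (i, 0) = (if i = 0 then complex_of_real r else 0)"
    and "\<And>j. j < Suc k \<Longrightarrow> B $$ (0, j) = (if j = 0 then complex_of_real r else 0)"
    and "hermitian (mat k k (\<lambda>(i, j). B $$ (Suc i, Suc j)))"
proof -
  have w: "\<And>i. i < Suc k \<Longrightarrow> ws ! i \<in> carrier_vec (Suc k)"
    and wn: "\<And>i j. i < Suc k \<Longrightarrow> j < Suc k \<Longrightarrow> ws ! i \<bullet>c ws ! j = (if i = j then 1 else 0)"
    using orthonormalD[OF ws] by auto
  have W: "mat_of_cols (Suc k) ws \<in> carrier_mat (Suc k) (Suc k)"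
    by (rule orthonormal_mat_of_cols_carrier[OF ws])
  show "B \<in> carrier_mat (Suc k) (Suc k)"
    unfolding B_def using mult_carrier_mat[OF mult_carrier_mat[OF mat_adjoint_carrier[OF W] A] W] .
  have Bij: "B $$ (i, j) = (A *\<^sub>v ws ! j) \<bullet>c ws ! i" if "i < Suc k" "j < Suc k" for i j
    unfolding B_def using mult_adjoint_index[OF ws A that] .
  have Bij': "B $$ (i, j) = ws ! j \<bullet>c (A *\<^sub>v ws ! i)" if "i < Suc k" "j < Suc k" for i j
    using hermitian_cscalar_prod[OF A h w[OF that(2)] w[OF that(1)]] by (simp add: Bij[OF that])
  show "B $$ (i, 0) = (if i = 0 then complex_of_real r else 0)" if "i < Suc k" for i
    using that w wn[of 0 i] by (simp add: Bij ev cscalar_prod_smult[of _ "Suc k"])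
  show "B $$ (0, j) = (if j = 0 then complex_of_real r else 0)" if "j < Suc k" for j
    using that w wn[of j 0] by (simp add: Bij' ev cscalar_prod_smult[of _ "Suc k"])
  show "hermitian (mat k k (\<lambda>(i, j). B $$ (Suc i, Suc j)))"
  proof (rule hermitianI)
    fix i j assume ij: "i < k" "j < k"
    then have "B $$ (Suc i, Suc j) = ws ! Suc j \<bullet>c (A *\<^sub>v ws ! Suc i)" by (simp add: Bij')
    also have "\<dots> = cnj ((A *\<^sub>v ws ! Suc i) \<bullet>c ws ! Suc j)"
      using ij w A by (intro cscalar_prod_commute[of _ "Suc k"]) auto
    also have "\<dots> = cnj (B $$ (Suc j, Suc i))" using ij by (simp add: Bij)
    finally show "mat k k (\<lambda>(i, j). B $$ (Suc i, Suc j)) $$ (i, j)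
        = cnj (mat k k (\<lambda>(i, j). B $$ (Suc i, Suc j)) $$ (j, i))"
      using ij by simp
  qed simp
qed

theorem hermitian_eigenbasis:
  fixes A :: "complex mat"
  assumes "A \<in> carrier_mat n n" and "hermitian A"
  obtains us es where "eigenbasis n A us es"
proof -
  have "\<exists>us es. eigenbasis n A us es"
    using assms
  proof (induction n arbitrary: A)
    case 0
    have "eigenbasis 0 A [] []" by (simp add: eigenbasis_def orthonormal_def)
    then show ?case by blast
  next
    case (Suc k)
    note A = Suc.prems(1) and h = Suc.prems(2)
    obtain v r where v: "v \<in> carrier_vec (Suc k)" "v \<bullet>c v = 1"
      and Av: "A *\<^sub>v v = complex_of_real r \<cdot>\<^sub>v v"
      using hermitian_unit_eigenvector[OF A h] by auto
    obtain ws where ws: "orthonormal (Suc k) ws" "ws ! 0 = v"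
      using orthonormal_extension[OF v] .
    let ?B = "mat_adjoint (mat_of_cols (Suc k) ws) * A * mat_of_cols (Suc k) ws"
    have "A *\<^sub>v ws ! 0 = complex_of_real r \<cdot>\<^sub>v ws ! 0" using Av ws(2) by simp
    note B = hermitian_deflation[OF A h ws(1) this]
    obtain us es where "eigenbasis k (mat k k (\<lambda>(i, j). ?B $$ (Suc i, Suc j))) us es"
      using Suc.IH[OF _ B(4)] by auto
    then have "eigenbasis (Suc k) ?B (vCons 1 (0\<^sub>v k) # map (vCons 0) us) (r # es)"
      using eigenbasis_block[OF B(1-3)] by simp
    then have "eigenbasis (Suc k) A
        (map (\<lambda>x. mat_of_cols (Suc k) ws *\<^sub>v x) (vCons 1 (0\<^sub>v k) # map (vCons 0) us)) (r # es)"
      by (rule eigenbasis_unitary_similar[OF A ws(1)])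
    then show ?case by blast
  qed
  then show thesis using that by blast
qed

lemma proots_prod_linear_factors: "proots (\<Prod>a\<leftarrow>as. [:- a, 1:]) = mset (as :: complex list)"
proof (induction as)
  case (Cons a as)
  have nz: "(\<Prod>e\<leftarrow>as. [:- e, 1:]) \<noteq> (0 :: complex poly)" by (auto simp: prod_list_zero_iff)
  have "proots (\<Prod>e\<leftarrow>a # as. [:- e, 1:]) = proots ([:- a, 1:] * (\<Prod>e\<leftarrow>as. [:- e, 1:]))" by simp
  also have "\<dots> = proots [:- a, 1:] + proots (\<Prod>e\<leftarrow>as. [:- e, 1:])" using nz by (intro proots_mult) auto
  also have "\<dots> = mset (a # as)" using Cons proots_linear_factor[of "- a"] by simp
  finally show ?case .
qed simp

lemma size_proots_char_poly:
  fixes A :: "complex mat"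
  assumes "A \<in> carrier_mat n n"
  shows "size (proots (char_poly A)) = n"
proof -
  obtain as where "char_poly A = (\<Prod>a\<leftarrow>as. [:- a, 1:])" "length as = n"
    using char_poly_factorized[OF assms] by blast
  then show ?thesis by (simp add: proots_prod_linear_factors)
qed

lemma eigenvector_of_proots_char_poly:
  fixes A :: "complex mat"
  assumes A: "A \<in> carrier_mat n n" and e: "e \<in># proots (char_poly A)"
  obtains v where "v \<in> carrier_vec n" "v \<noteq> 0\<^sub>v n" "A *\<^sub>v v = e \<cdot>\<^sub>v v"
proof -
  have "char_poly A \<noteq> 0" using degree_monic_char_poly[OF A] by auto
  then have "poly (char_poly A) e = 0" using e by simp
  then have "eigenvalue A e" using eigenvalue_root_char_poly[OF A] by simp
  then show thesis using that A unfolding eigenvalue_def eigenvector_def by auto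
qed

lemma eigenbasis_proots_char_poly:
  fixes A :: "complex mat"
  assumes A: "A \<in> carrier_mat n n" and eb: "eigenbasis n A us es"
  shows "proots (char_poly A) = mset (map complex_of_real es)"
proof -
  let ?U = "mat_of_cols n us"
  define D where "D = mat n n (\<lambda>(i, j). if i = j then complex_of_real (es ! i) else 0)"
  have us: "orthonormal n us" and es: "length es = n"
    and ev: "\<forall>k<n. A *\<^sub>v us ! k = complex_of_real (es ! k) \<cdot>\<^sub>v us ! k"
    using eb unfolding eigenbasis_def by blast+
  have U: "?U \<in> carrier_mat n n" and V: "mat_adjoint ?U \<in> carrier_mat n n" and D: "D \<in> carrier_mat n n"
    using orthonormal_mat_of_cols_carrier[OF us] by (auto simp: D_def)
  have AU: "A * ?U = ?U * D"
  proof (rule eq_matI)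
    fix a k assume "a < dim_row (?U * D)" "k < dim_col (?U * D)"
    then have ak: "a < n" "k < n" using U D by auto
    have u: "us ! k \<in> carrier_vec n" using orthonormalD(2)[OF us ak(2)] .
    have "(A * ?U) $$ (a, k) = (A *\<^sub>v us ! k) $ a"
      using A ak u orthonormalD(1)[OF us] by simp
    also have "\<dots> = ?U $$ (a, k) * complex_of_real (es ! k)"
      using ev ak u orthonormalD(1)[OF us] by (simp add: mat_of_cols_index mult.commute)
    also have "\<dots> = (\<Sum>b\<in>{0..<n}. ?U $$ (a, b) * D $$ (b, k))"
      using ak by (simp add: D_def if_distrib[of "\<lambda>x. _ * x"] cong: if_cong)
    also have "\<dots> = (?U * D) $$ (a, k)"
      using U D ak by (auto simp: scalar_prod_def intro!: sum.cong)
    finally show "(A * ?U) $$ (a, k) = (?U * D) $$ (a, k)" .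
  qed (use A U D in auto)
  have "A = A * (?U * mat_adjoint ?U)" using A by (simp add: orthonormal_mult_adjoint[OF us])
  also have "\<dots> = (A * ?U) * mat_adjoint ?U" by (rule assoc_mult_mat[OF A U V, symmetric])
  finally have "similar_mat_wit A D ?U (mat_adjoint ?U)"
    unfolding AU
    by (intro similar_mat_witI[OF orthonormal_mult_adjoint[OF us] orthonormal_adjoint_mult[OF us]] A D U V)
  then have "char_poly A = char_poly D" by (intro char_poly_similar) (auto simp: similar_mat_def)
  also have "\<dots> = (\<Prod>a\<leftarrow>diag_mat D. [:- a, 1:])"
    by (rule char_poly_upper_triangular[OF D]) (simp add: upper_triangular_def D_def)
  also have "diag_mat D = map complex_of_real es"
    using es unfolding diag_mat_def D_def by (intro nth_equalityI) auto
  finally show ?thesis using proots_prod_linear_factors[of "map complex_of_real es"] by simp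
qed

lemma eigenbasis_size_filter:
  fixes A :: "complex mat"
  assumes A: "A \<in> carrier_mat n n" and eb: "eigenbasis n A us es"
  shows "size {#z \<in># proots (char_poly A). t < Re z#} = card {k. k < n \<and> t < es ! k}"
proof -
  have es: "length es = n" using eb unfolding eigenbasis_def by blast
  have "size {#z \<in># proots (char_poly A). t < Re z#} = length (filter (\<lambda>e. t < e) es)"
    by (simp add: eigenbasis_proots_char_poly[OF A eb] filter_mset_image_mset flip: mset_filter)
  also have "\<dots> = card {k. k < n \<and> t < es ! k}" using es by (simp add: length_filter_conv_card)
  finally show ?thesis .
qed

section \<open>Rayleigh quotients\<close>

lemma eigenbasis_norm:
  assumes eb: "eigenbasis n A us es" and x: "x \<in> carrier_vec n"
  shows "Re (x \<bullet>c x) = (\<Sum>k<n. (cmod (x \<bullet>c us ! k))\<^sup>2)"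
proof -
  have "x \<bullet>c x = (\<Sum>k<n. (x \<bullet>c us ! k) * cnj (x \<bullet>c us ! k))"
    using eb x unfolding eigenbasis_def by (blast intro: orthonormal_parseval)
  then show ?thesis by (simp add: Re_sum flip: complex_norm_square)
qed

lemma eigenbasis_quadratic_form:
  fixes A :: "complex mat"
  assumes A: "A \<in> carrier_mat n n" "hermitian A" and eb: "eigenbasis n A us es"
    and x: "x \<in> carrier_vec n"
  shows "Re ((A *\<^sub>v x) \<bullet>c x) = (\<Sum>k<n. es ! k * (cmod (x \<bullet>c us ! k))\<^sup>2)"
proof -
  have us: "orthonormal n us" and ev: "\<forall>k<n. A *\<^sub>v us ! k = complex_of_real (es ! k) \<cdot>\<^sub>v us ! k"
    using eb unfolding eigenbasis_def by blast+
  have Ax: "A *\<^sub>v x \<in> carrier_vec n" using A x by simp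
  have coeff: "(A *\<^sub>v x) \<bullet>c us ! k = complex_of_real (es ! k) * (x \<bullet>c us ! k)" if k: "k < n" for k
  proof -
    have u: "us ! k \<in> carrier_vec n" using orthonormalD(2)[OF us k] .
    have "(A *\<^sub>v x) \<bullet>c us ! k = x \<bullet>c (A *\<^sub>v us ! k)" by (rule hermitian_cscalar_prod[OF A x u])
    also have "\<dots> = complex_of_real (es ! k) * (x \<bullet>c us ! k)"
      using ev k x u by (simp add: cscalar_prod_smult[of _ n])
    finally show ?thesis .
  qed
  have "(A *\<^sub>v x) \<bullet>c x = (\<Sum>k<n. ((A *\<^sub>v x) \<bullet>c us ! k) * cnj (x \<bullet>c us ! k))"
    by (rule orthonormal_parseval[OF us Ax x])
  also have "\<dots> = (\<Sum>k<n. complex_of_real (es ! k * (cmod (x \<bullet>c us ! k))\<^sup>2))"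
    by (intro sum.cong refl) (simp add: coeff mult.assoc flip: complex_norm_square)
  finally show ?thesis by (simp add: Re_sum)
qed

lemma eigenbasis_rayleigh_le:
  fixes A :: "complex mat"
  assumes A: "A \<in> carrier_mat n n" "hermitian A" and eb: "eigenbasis n A us es"
    and x: "x \<in> carrier_vec n"
    and orth: "\<And>k. k < n \<Longrightarrow> t < es ! k \<Longrightarrow> x \<bullet>c us ! k = 0"
  shows "Re ((A *\<^sub>v x) \<bullet>c x) \<le> t * Re (x \<bullet>c x)"
proof -
  have "Re ((A *\<^sub>v x) \<bullet>c x) = (\<Sum>k<n. es ! k * (cmod (x \<bullet>c us ! k))\<^sup>2)"
    by (rule eigenbasis_quadratic_form[OF A eb x])
  also have "\<dots> \<le> (\<Sum>k<n. t * (cmod (x \<bullet>c us ! k))\<^sup>2)"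
  proof (rule sum_mono)
    fix k assume "k \<in> {..<n}"
    then show "es ! k * (cmod (x \<bullet>c us ! k))\<^sup>2 \<le> t * (cmod (x \<bullet>c us ! k))\<^sup>2"
      using orth[of k] by (cases "t < es ! k") (auto intro: mult_right_mono)
  qed
  also have "\<dots> = t * Re (x \<bullet>c x)" by (simp add: eigenbasis_norm[OF eb x] sum_distrib_left)
  finally show ?thesis .
qed

lemma eigenbasis_rayleigh_gt:
  fixes A :: "complex mat"
  assumes A: "A \<in> carrier_mat n n" "hermitian A" and eb: "eigenbasis n A us es"
    and x: "x \<in> carrier_vec n" "x \<noteq> 0\<^sub>v n"
    and span: "\<And>k. k < n \<Longrightarrow> x \<bullet>c us ! k \<noteq> 0 \<Longrightarrow> t < es ! k"
  shows "t * Re (x \<bullet>c x) < Re ((A *\<^sub>v x) \<bullet>c x)"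
proof -
  obtain k0 where k0: "k0 < n" "x \<bullet>c us ! k0 \<noteq> 0"
  proof (rule ccontr)
    assume "\<not> thesis"
    then have "\<forall>k<n. x \<bullet>c us ! k = 0" using that by blast
    then have "Re (x \<bullet>c x) = 0" by (simp add: eigenbasis_norm[OF eb x(1)])
    then show False using Re_cscalar_prod_self_pos[OF x] by simp
  qed
  have "t * Re (x \<bullet>c x) = (\<Sum>k<n. t * (cmod (x \<bullet>c us ! k))\<^sup>2)"
    by (simp add: eigenbasis_norm[OF eb x(1)] sum_distrib_left)
  also have "\<dots> < (\<Sum>k<n. es ! k * (cmod (x \<bullet>c us ! k))\<^sup>2)"
  proof (rule sum_strict_mono_ex1)
    show "\<forall>k\<in>{..<n}. t * (cmod (x \<bullet>c us ! k))\<^sup>2 \<le> es ! k * (cmod (x \<bullet>c us ! k))\<^sup>2"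
    proof
      fix k assume k: "k \<in> {..<n}"
      show "t * (cmod (x \<bullet>c us ! k))\<^sup>2 \<le> es ! k * (cmod (x \<bullet>c us ! k))\<^sup>2"
      proof (cases "x \<bullet>c us ! k = 0")
        case False
        then show ?thesis using span[of k] k by (intro mult_right_mono) auto
      qed simp
    qed
    show "\<exists>k\<in>{..<n}. t * (cmod (x \<bullet>c us ! k))\<^sup>2 < es ! k * (cmod (x \<bullet>c us ! k))\<^sup>2"
      using k0 span[OF k0] by (intro bexI[of _ k0] mult_strict_right_mono) auto
  qed simp
  also have "\<dots> = Re ((A *\<^sub>v x) \<bullet>c x)" by (rule eigenbasis_quadratic_form[OF A eb x(1), symmetric])
  finally show ?thesis .
qed

lemma exists_orthogonal_combination:
  fixes a b w :: "complex vec"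
  assumes a: "a \<in> carrier_vec n" and b: "b \<in> carrier_vec n" and w: "w \<in> carrier_vec n"
  obtains \<alpha> \<beta> where "\<alpha> \<noteq> 0 \<or> \<beta> \<noteq> 0" "(\<alpha> \<cdot>\<^sub>v a + \<beta> \<cdot>\<^sub>v b) \<bullet>c w = 0"
proof (cases "a \<bullet>c w = 0")
  case True
  show thesis
    by (rule that[of 1 0]) (use True a b w in \<open>simp_all add: cscalar_prod_add[of _ n] cscalar_prod_smult[of _ n]\<close>)
next
  case False
  show thesis
  proof (rule that[of "b \<bullet>c w" "- (a \<bullet>c w)"])
    show "b \<bullet>c w \<noteq> 0 \<or> - (a \<bullet>c w) \<noteq> 0" using False by simp
    show "((b \<bullet>c w) \<cdot>\<^sub>v a + - (a \<bullet>c w) \<cdot>\<^sub>v b) \<bullet>c w = 0"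
      using a b w by (simp add: cscalar_prod_add[of _ n] cscalar_prod_smult[of _ n] algebra_simps)
  qed
qed

text \<open>Courant-Fischer: two eigenvectors with eigenvalues above \<open>t\<close> span a plane that meets
  the hyperplane \<open>x $ 0 = 0\<close>.\<close>

lemma card_eigenvalues_gt_le_1:
  fixes A :: "complex mat"
  assumes A: "A \<in> carrier_mat n n" "hermitian A"
    and bound: "\<And>x. x \<in> carrier_vec n \<Longrightarrow> x $ 0 = 0 \<Longrightarrow> Re ((A *\<^sub>v x) \<bullet>c x) \<le> t * Re (x \<bullet>c x)"
  shows "size {#z \<in># proots (char_poly A). t < Re z#} \<le> 1"
proof -
  obtain us es where eb: "eigenbasis n A us es" using hermitian_eigenbasis[OF A] .
  have us: "orthonormal n us" using eb unfolding eigenbasis_def by blast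
  define K where "K = {k. k < n \<and> t < es ! k}"
  have "card K \<le> 1"
  proof (rule ccontr)
    assume "\<not> card K \<le> 1"
    moreover have "finite K" unfolding K_def by simp
    ultimately obtain k1 k2 where k: "k1 \<in> K" "k2 \<in> K" "k1 \<noteq> k2"
      using card_le_Suc0_iff_eq[of K] by auto
    then have k1: "k1 < n" "t < es ! k1" and k2: "k2 < n" "t < es ! k2" unfolding K_def by auto
    have u: "us ! k1 \<in> carrier_vec n" "us ! k2 \<in> carrier_vec n" using orthonormalD(2)[OF us] k1 k2 by auto
    have n: "0 < n" using k1 by simp
    obtain \<alpha> \<beta> where ab: "\<alpha> \<noteq> 0 \<or> \<beta> \<noteq> 0"
      and x0: "(\<alpha> \<cdot>\<^sub>v us ! k1 + \<beta> \<cdot>\<^sub>v us ! k2) \<bullet>c unit_vec n 0 = 0"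
      using exists_orthogonal_combination[OF u unit_vec_carrier] .
    define x where "x = \<alpha> \<cdot>\<^sub>v us ! k1 + \<beta> \<cdot>\<^sub>v us ! k2"
    have x: "x \<in> carrier_vec n" unfolding x_def using u by simp
    have coord: "x \<bullet>c us ! k = \<alpha> * (if k1 = k then 1 else 0) + \<beta> * (if k2 = k then 1 else 0)"
      if "k < n" for k
      unfolding x_def using u orthonormalD(2,3)[OF us] that k1 k2
      by (simp add: cscalar_prod_add[of _ n] cscalar_prod_smult[of _ n])
    have "x \<noteq> 0\<^sub>v n"
    proof
      assume "x = 0\<^sub>v n"
      then have "x \<bullet>c us ! k1 = 0" "x \<bullet>c us ! k2 = 0" using u by auto
      then show False using ab coord[OF k1(1)] coord[OF k2(1)] k(3) by auto
    qed
    then have "t * Re (x \<bullet>c x) < Re ((A *\<^sub>v x) \<bullet>c x)"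
      using coord k1 k2 by (intro eigenbasis_rayleigh_gt[OF A eb x]) (auto split: if_splits)
    moreover have "Re ((A *\<^sub>v x) \<bullet>c x) \<le> t * Re (x \<bullet>c x)"
      using bound[OF x] x0 cscalar_prod_unit_vec[OF x n] unfolding x_def by simp
    ultimately show False by simp
  qed
  then show ?thesis unfolding K_def by (simp add: eigenbasis_size_filter[OF A(1) eb])
qed

lemma exists_rayleigh_le_in_plane:
  fixes A :: "complex mat"
  assumes A: "A \<in> carrier_mat n n" "hermitian A"
    and card: "size {#z \<in># proots (char_poly A). t < Re z#} \<le> 1"
    and a: "a \<in> carrier_vec n" and b: "b \<in> carrier_vec n"
  obtains \<alpha> \<beta> where "\<alpha> \<noteq> 0 \<or> \<beta> \<noteq> 0"
    "Re ((A *\<^sub>v (\<alpha> \<cdot>\<^sub>v a + \<beta> \<cdot>\<^sub>v b)) \<bullet>c (\<alpha> \<cdot>\<^sub>v a + \<beta> \<cdot>\<^sub>v b))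
      \<le> t * Re ((\<alpha> \<cdot>\<^sub>v a + \<beta> \<cdot>\<^sub>v b) \<bullet>c (\<alpha> \<cdot>\<^sub>v a + \<beta> \<cdot>\<^sub>v b))"
proof -
  obtain us es where eb: "eigenbasis n A us es" using hermitian_eigenbasis[OF A] .
  have us: "orthonormal n us" using eb unfolding eigenbasis_def by blast
  define K where "K = {k. k < n \<and> t < es ! k}"
  have K: "finite K" "card K \<le> 1"
    using card unfolding K_def by (simp_all add: eigenbasis_size_filter[OF A(1) eb])
  obtain w where w: "w \<in> carrier_vec n" and Kw: "\<And>k. k < n \<Longrightarrow> t < es ! k \<Longrightarrow> us ! k = w"
  proof (cases "K = {}")
    case True
    then show ?thesis by (intro that[of "0\<^sub>v n"]) (auto simp: K_def)
  next
    case False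
    then obtain k0 where k0: "k0 \<in> K" by blast
    have K0: "K = {k0}" using card_le_Suc0_iff_eq[OF K(1)] K(2) k0 by auto
    show ?thesis
    proof (rule that)
      show "us ! k0 \<in> carrier_vec n" using k0 orthonormalD(2)[OF us] by (simp add: K_def)
      fix k assume "k < n" "t < es ! k"
      then have "k \<in> K" by (simp add: K_def)
      then show "us ! k = us ! k0" using K0 by simp
    qed
  qed
  obtain \<alpha> \<beta> where ab: "\<alpha> \<noteq> 0 \<or> \<beta> \<noteq> 0" and orth: "(\<alpha> \<cdot>\<^sub>v a + \<beta> \<cdot>\<^sub>v b) \<bullet>c w = 0"
    using exists_orthogonal_combination[OF a b w] .
  show thesis
  proof (rule that[OF ab])
    show "Re ((A *\<^sub>v (\<alpha> \<cdot>\<^sub>v a + \<beta> \<cdot>\<^sub>v b)) \<bullet>c (\<alpha> \<cdot>\<^sub>v a + \<beta> \<cdot>\<^sub>v b))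
      \<le> t * Re ((\<alpha> \<cdot>\<^sub>v a + \<beta> \<cdot>\<^sub>v b) \<bullet>c (\<alpha> \<cdot>\<^sub>v a + \<beta> \<cdot>\<^sub>v b))"
      by (rule eigenbasis_rayleigh_le[OF A eb]) (use a b orth Kw in auto)
  qed
qed

lemma exists_eigenvalue_ge_rayleigh:
  fixes A :: "complex mat"
  assumes A: "A \<in> carrier_mat n n" "hermitian A" and x: "x \<in> carrier_vec n" "x \<noteq> 0\<^sub>v n"
  obtains \<theta> where "complex_of_real \<theta> \<in># proots (char_poly A)"
    "Re ((A *\<^sub>v x) \<bullet>c x) \<le> \<theta> * Re (x \<bullet>c x)"
proof -
  obtain us es where eb: "eigenbasis n A us es" using hermitian_eigenbasis[OF A] .
  have es: "length es = n" using eb unfolding eigenbasis_def by blast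
  have "n \<noteq> 0" using x by auto
  then have "es \<noteq> []" using es by auto
  then have max: "Max (set es) \<in> set es" "\<And>e. e \<in> set es \<Longrightarrow> e \<le> Max (set es)" by auto
  show thesis
  proof (rule that)
    show "complex_of_real (Max (set es)) \<in># proots (char_poly A)"
      using max(1) by (simp add: eigenbasis_proots_char_poly[OF A(1) eb])
    show "Re ((A *\<^sub>v x) \<bullet>c x) \<le> Max (set es) * Re (x \<bullet>c x)"
    proof (rule eigenbasis_rayleigh_le[OF A eb x(1)])
      fix k assume k: "k < n" "Max (set es) < es ! k"
      have "es ! k \<le> Max (set es)" using max(2)[OF nth_mem] k(1) es by simp
      then show "x \<bullet>c us ! k = 0" using k(2) by simp
    qed
  qed
qed

section \<open>The signless Laplacian\<close>

definition nbrs :: "nat \<Rightarrow> (nat \<Rightarrow> nat \<Rightarrow> bool) \<Rightarrow> nat \<Rightarrow> nat set" where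
  "nbrs n E i = {j. j < n \<and> E i j}"

lemma deg_eq_card_nbrs: "deg n E i = card (nbrs n E i)"
  unfolding deg_def nbrs_def ..

lemma finite_nbrs [simp]: "finite (nbrs n E i)"
  unfolding nbrs_def by simp

lemma nbrs_subset: "simple_graph n E \<Longrightarrow> nbrs n E i \<subseteq> {..<n} - {i}"
  unfolding nbrs_def simple_graph_def by auto

lemma deg_le:
  assumes "simple_graph n E" "i < n"
  shows "deg n E i \<le> n - 1"
proof -
  have "deg n E i \<le> card ({..<n} - {i})"
    unfolding deg_eq_card_nbrs using nbrs_subset[OF assms(1)] by (intro card_mono) auto
  then show ?thesis using assms(2) by simp
qed

lemma max_deg_eqI:
  assumes "simple_graph n E" "i < n" "deg n E i = n - 1"
  shows "max_deg n E = n - 1"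
  unfolding max_deg_def
proof (rule Max_eqI)
  show "d \<le> n - 1" if "d \<in> deg n E ` {0..<n}" for d using that deg_le[OF assms(1)] by auto
  show "n - 1 \<in> deg n E ` {0..<n}" using assms(2,3) by force
qed simp

lemma Q_matrix_carrier [simp]: "Q_matrix n E \<in> carrier_mat n n"
  unfolding Q_matrix_def by simp

lemma Q_matrix_dim [simp]: "dim_row (Q_matrix n E) = n" "dim_col (Q_matrix n E) = n"
  unfolding Q_matrix_def by simp_all

lemma Q_matrix_mult_vec_carrier [simp]: "x \<in> carrier_vec n \<Longrightarrow> Q_matrix n E *\<^sub>v x \<in> carrier_vec n"
  using mult_mat_vec_carrier[OF Q_matrix_carrier] .

lemma Q_matrix_index:
  "i < n \<Longrightarrow> j < n \<Longrightarrow>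
    Q_matrix n E $$ (i, j) = (if E i j then 1 else 0) + (if i = j then of_nat (deg n E i) else 0)"
  unfolding Q_matrix_def by simp

lemma hermitian_Q_matrix:
  assumes "simple_graph n E"
  shows "hermitian (Q_matrix n E)"
  by (rule hermitianI[OF Q_matrix_carrier]) (use assms in \<open>auto simp: Q_matrix_index simple_graph_def\<close>)

lemma Q_matrix_mult_vec:
  fixes y :: "complex vec"
  assumes y: "y \<in> carrier_vec n" and i: "i < n"
  shows "(Q_matrix n E *\<^sub>v y) $ i = of_nat (deg n E i) * y $ i + (\<Sum>j\<in>nbrs n E i. y $ j)"
proof -
  have "(Q_matrix n E *\<^sub>v y) $ i = (\<Sum>j<n. Q_matrix n E $$ (i, j) * y $ j)"
    by (rule mult_mat_vec_index_sum[OF Q_matrix_carrier y i])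
  also have "\<dots> = (\<Sum>j<n. (if E i j then y $ j else 0) + (if i = j then of_nat (deg n E i) * y $ j else 0))"
    by (intro sum.cong refl) (simp add: Q_matrix_index i distrib_right)
  also have "\<dots> = (\<Sum>j<n. (if E i j then y $ j else 0)) + of_nat (deg n E i) * y $ i"
    using i by (simp add: sum.distrib)
  also have "(\<Sum>j<n. (if E i j then y $ j else 0)) = (\<Sum>j\<in>nbrs n E i. y $ j)"
    unfolding nbrs_def by (simp add: sum.If_cases Collect_conj_eq lessThan_def Int_commute)
  finally show ?thesis by simp
qed

lemma sum_symmetric_weights:
  fixes w :: "nat \<Rightarrow> nat \<Rightarrow> real"
  assumes "\<And>a b. w a b = w b a"
  shows "(\<Sum>a<n. \<Sum>b<n. w a b * (X a + X b) / 2) = (\<Sum>a<n. (\<Sum>b<n. w a b) * X a)"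
proof -
  have "(\<Sum>a<n. \<Sum>b<n. w a b * X b) = (\<Sum>b<n. \<Sum>a<n. w a b * X b)" by (rule sum.swap)
  also have "\<dots> = (\<Sum>b<n. \<Sum>a<n. w b a * X b)" by (intro sum.cong refl) (metis assms)
  finally have swap: "(\<Sum>a<n. \<Sum>b<n. w a b * X b) = (\<Sum>a<n. \<Sum>b<n. w a b * X a)" .
  have "(\<Sum>a<n. \<Sum>b<n. w a b * (X a + X b) / 2)
      = ((\<Sum>a<n. \<Sum>b<n. w a b * X a) + (\<Sum>a<n. \<Sum>b<n. w a b * X b)) / 2"
    by (simp add: distrib_left add_divide_distrib sum.distrib sum_divide_distrib)
  then show ?thesis using swap by (simp add: sum_distrib_right)
qed

lemma Re_mult_cnj_le:
  fixes z w :: complex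
  shows "Re (z * cnj w) \<le> ((cmod z)\<^sup>2 + (cmod w)\<^sup>2) / 2"
proof -
  have "Re (z * cnj w) \<le> cmod z * cmod w"
    using complex_Re_le_cmod[of "z * cnj w"] by (simp add: norm_mult)
  moreover have "2 * (cmod z * cmod w) \<le> (cmod z)\<^sup>2 + (cmod w)\<^sup>2"
    using sum_squares_bound[of "cmod z" "cmod w"] by (simp add: mult.assoc)
  ultimately show ?thesis by simp
qed

lemma sum_indicator_nbrs:
  "(\<Sum>b<n. if E a b \<and> P b then 1 else 0) = real (card {b \<in> nbrs n E a. P b})"
proof -
  have "(\<Sum>b<n. if E a b \<and> P b then 1 else 0) = (\<Sum>b\<in>{..<n} \<inter> {b. E a b \<and> P b}. 1 :: real)"
    by (simp add: sum.If_cases)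
  also have "{..<n} \<inter> {b. E a b \<and> P b} = {b \<in> nbrs n E a. P b}" by (auto simp: nbrs_def)
  finally show ?thesis by simp
qed

lemma Re_Q_form_le:
  fixes x :: "complex vec"
  assumes sg: "simple_graph n E" and x: "x \<in> carrier_vec n"
  shows "Re ((Q_matrix n E *\<^sub>v x) \<bullet>c x)
    \<le> (\<Sum>a<n. real (deg n E a + card {b \<in> nbrs n E a. x $ b \<noteq> 0}) * (cmod (x $ a))\<^sup>2)"
proof -
  define X where "X a = (cmod (x $ a))\<^sup>2" for a
  define w :: "nat \<Rightarrow> nat \<Rightarrow> real" where
    "w a b = (if E a b \<and> x $ a \<noteq> 0 \<and> x $ b \<noteq> 0 then 1 else 0)" for a b
  have pair: "Re (x $ b * cnj (x $ a)) \<le> w a b * (X a + X b) / 2" if "E a b" for a b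
  proof (cases "x $ a = 0 \<or> x $ b = 0")
    case False
    then have "w a b = 1" using that unfolding w_def by simp
    then show ?thesis using Re_mult_cnj_le[of "x $ b" "x $ a"] unfolding X_def by (simp add: add.commute)
  qed (auto simp: w_def)
  have row: "Re ((Q_matrix n E *\<^sub>v x) $ a * cnj (x $ a)) \<le> deg n E a * X a + (\<Sum>b<n. w a b * (X a + X b) / 2)"
    if a: "a < n" for a
  proof -
    have "Re ((Q_matrix n E *\<^sub>v x) $ a * cnj (x $ a))
        = deg n E a * X a + (\<Sum>b\<in>nbrs n E a. Re (x $ b * cnj (x $ a)))"
      by (simp add: Q_matrix_mult_vec[OF x a] distrib_right sum_distrib_right Re_sum X_def mult.assoc
          flip: complex_norm_square)
    also have "(\<Sum>b\<in>nbrs n E a. Re (x $ b * cnj (x $ a))) \<le> (\<Sum>b\<in>nbrs n E a. w a b * (X a + X b) / 2)"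
      by (rule sum_mono, rule pair) (simp add: nbrs_def)
    also have "\<dots> = (\<Sum>b<n. w a b * (X a + X b) / 2)"
      by (rule sum.mono_neutral_left) (auto simp: nbrs_def w_def)
    finally show ?thesis by simp
  qed
  have "Re ((Q_matrix n E *\<^sub>v x) \<bullet>c x) = Re (\<Sum>a<n. (Q_matrix n E *\<^sub>v x) $ a * cnj (x $ a))"
    using x by (subst cscalar_prod_sum[of _ n]) auto
  also have "\<dots> = (\<Sum>a<n. Re ((Q_matrix n E *\<^sub>v x) $ a * cnj (x $ a)))" by (rule Re_sum)
  also have "\<dots> \<le> (\<Sum>a<n. deg n E a * X a + (\<Sum>b<n. w a b * (X a + X b) / 2))"
    by (rule sum_mono, rule row) simp
  also have "\<dots> = (\<Sum>a<n. (deg n E a + (\<Sum>b<n. w a b)) * X a)"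
    using sum_symmetric_weights[where w = w and X = X] sg
    by (simp add: sum.distrib distrib_right w_def simple_graph_def)
  also have "\<dots> = (\<Sum>a<n. real (deg n E a + card {b \<in> nbrs n E a. x $ b \<noteq> 0}) * X a)"
  proof (rule sum.cong[OF refl])
    fix a assume "a \<in> {..<n}"
    show "(deg n E a + (\<Sum>b<n. w a b)) * X a = real (deg n E a + card {b \<in> nbrs n E a. x $ b \<noteq> 0}) * X a"
    proof (cases "x $ a = 0")
      case False
      then have "(\<Sum>b<n. w a b) = real (card {b \<in> nbrs n E a. x $ b \<noteq> 0})"
        unfolding w_def using sum_indicator_nbrs[where n = n and E = E and a = a and P = "\<lambda>b. x $ b \<noteq> 0"] by simp
      then show ?thesis by simp
    qed (simp add: X_def)
  qed
  finally show ?thesis unfolding X_def .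
qed

lemma sum_two_support:
  fixes u w n :: nat
  assumes "u < n" "w < n" "u \<noteq> w" "\<And>a. a < n \<Longrightarrow> a \<noteq> u \<Longrightarrow> a \<noteq> w \<Longrightarrow> f a = 0"
  shows "(\<Sum>a<n. f a) = f u + f w"
proof -
  have "(\<Sum>a<n. f a) = (\<Sum>a\<in>{u, w}. f a)" by (rule sum.mono_neutral_right) (use assms in auto)
  then show ?thesis using assms(3) by simp
qed

lemma Re_Q_form_pair_ge:
  fixes \<alpha> \<beta> :: complex
  assumes sg: "simple_graph n E" and uw: "u < n" "w < n" "u \<noteq> w"
    and du: "\<delta> \<le> deg n E u" and dw: "\<delta> \<le> deg n E w"
  defines "x \<equiv> \<alpha> \<cdot>\<^sub>v unit_vec n u + \<beta> \<cdot>\<^sub>v unit_vec n w"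
  shows "(real \<delta> - 1) * Re (x \<bullet>c x) \<le> Re ((Q_matrix n E *\<^sub>v x) \<bullet>c x)"
proof -
  have x: "x \<in> carrier_vec n" unfolding x_def by simp
  have xa: "x $ a = (if a = u then \<alpha> else 0) + (if a = w then \<beta> else 0)" if "a < n" for a
    unfolding x_def using that uw by simp
  have Euw: "E w u = E u w" using sg unfolding simple_graph_def by blast
  have nbr: "(\<Sum>j\<in>nbrs n E v. x $ j) = (if E v v' then x $ v' else 0)"
    if "v < n" "v' < n" "v \<noteq> v'" "\<And>a. a < n \<Longrightarrow> a \<noteq> v \<Longrightarrow> a \<noteq> v' \<Longrightarrow> x $ a = 0" for v v'
  proof -
    have "(\<Sum>j\<in>nbrs n E v. x $ j) = (\<Sum>j\<in>nbrs n E v. if j = v' then x $ v' else 0)"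
      using that nbrs_subset[OF sg, of v] by (intro sum.cong refl) (auto simp: nbrs_def)
    then show ?thesis using that by (simp add: nbrs_def)
  qed
  have supp: "x $ a = 0" if "a < n" "a \<noteq> u" "a \<noteq> w" for a using xa that by simp
  have Qu: "(Q_matrix n E *\<^sub>v x) $ u = of_nat (deg n E u) * \<alpha> + (if E u w then \<beta> else 0)"
    using Q_matrix_mult_vec[OF x uw(1)] nbr[OF uw(1,2,3)] supp xa uw by simp
  have Qw: "(Q_matrix n E *\<^sub>v x) $ w = of_nat (deg n E w) * \<beta> + (if E u w then \<alpha> else 0)"
    using Q_matrix_mult_vec[OF x uw(2)] nbr[OF uw(2,1) uw(3)[symmetric]] supp xa uw Euw by auto
  define p where "p = (cmod \<alpha>)\<^sup>2"
  define r where "r = (cmod \<beta>)\<^sup>2"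
  have xx: "Re (x \<bullet>c x) = p + r"
    using uw supp xa by (simp add: Re_cscalar_prod_self[OF x] sum_two_support p_def r_def)
  have "Re ((Q_matrix n E *\<^sub>v x) \<bullet>c x)
      = Re ((Q_matrix n E *\<^sub>v x) $ u * cnj \<alpha> + (Q_matrix n E *\<^sub>v x) $ w * cnj \<beta>)"
    using x uw supp xa by (simp add: cscalar_prod_sum[of _ n] sum_two_support)
  also have "\<dots> = deg n E u * p + deg n E w * r + (if E u w then Re (\<beta> * cnj \<alpha> + \<alpha> * cnj \<beta>) else 0)"
  proof -
    have "(Q_matrix n E *\<^sub>v x) $ u * cnj \<alpha>
        = complex_of_real (deg n E u * p) + (if E u w then \<beta> * cnj \<alpha> else 0)"
      by (simp add: Qu p_def distrib_right mult.assoc flip: complex_norm_square)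
    moreover have "(Q_matrix n E *\<^sub>v x) $ w * cnj \<beta>
        = complex_of_real (deg n E w * r) + (if E u w then \<alpha> * cnj \<beta> else 0)"
      by (simp add: Qw r_def distrib_right mult.assoc flip: complex_norm_square)
    ultimately show ?thesis by simp
  qed
  finally have Qx: "Re ((Q_matrix n E *\<^sub>v x) \<bullet>c x)
      = deg n E u * p + deg n E w * r + (if E u w then Re (\<beta> * cnj \<alpha> + \<alpha> * cnj \<beta>) else 0)" .
  have "\<bar>Re (\<beta> * cnj \<alpha> + \<alpha> * cnj \<beta>)\<bar> \<le> cmod (\<beta> * cnj \<alpha>) + cmod (\<alpha> * cnj \<beta>)"
    by (meson abs_Re_le_cmod norm_triangle_ineq order_trans)
  also have "\<dots> = 2 * (cmod \<alpha> * cmod \<beta>)" by (simp add: norm_mult)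
  also have "\<dots> \<le> p + r" unfolding p_def r_def using sum_squares_bound[of "cmod \<alpha>" "cmod \<beta>"] by simp
  finally have cross: "- (p + r) \<le> (if E u w then Re (\<beta> * cnj \<alpha> + \<alpha> * cnj \<beta>) else 0)"
    using p_def r_def by auto
  have "real \<delta> * p \<le> deg n E u * p" "real \<delta> * r \<le> deg n E w * r"
    using du dw unfolding p_def r_def by (auto intro: mult_right_mono)
  moreover have "(real \<delta> - 1) * (p + r) = real \<delta> * p + real \<delta> * r - (p + r)" by (simp add: algebra_simps)
  ultimately show ?thesis unfolding xx Qx using cross by linarith
qed

text \<open>The test vector \<open>(n - 1, 1, \<dots>, 1)\<close> is an eigenvector of \<open>Q\<close> with eigenvalue \<open>n\<close> for the
  star \<open>K\<^sub>1\<^sub>,\<^sub>n\<^sub>-\<^sub>1\<close>; further edges only increase the form.\<close>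

lemma dominating_vertex_rayleigh:
  assumes sg: "simple_graph n E" and n: "2 \<le> n" and dom: "\<And>a. 0 < a \<Longrightarrow> a < n \<Longrightarrow> E 0 a"
  obtains v where "v \<in> carrier_vec n" "v \<noteq> 0\<^sub>v n" "real n * Re (v \<bullet>c v) \<le> Re ((Q_matrix n E *\<^sub>v v) \<bullet>c v)"
proof -
  define f :: "nat \<Rightarrow> real" where "f a = (if a = 0 then real (n - 1) else 1)" for a
  define v where "v = vec n (\<lambda>a. complex_of_real (f a))"
  have v: "v \<in> carrier_vec n" unfolding v_def by simp
  have f0: "0 \<le> f a" for a unfolding f_def by simp
  have vi: "v $ j = complex_of_real (f j)" if "j < n" for j unfolding v_def using that by simp
  have v0: "v \<noteq> 0\<^sub>v n"
  proof
    assume "v = 0\<^sub>v n"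
    then have "v $ 1 = 0" using n by simp
    then show False using vi[of 1] n unfolding f_def by simp
  qed
  have nbrs0: "nbrs n E 0 = {1..<n}"
  proof
    show "nbrs n E 0 \<subseteq> {1..<n}"
      using sg unfolding nbrs_def simple_graph_def by (auto simp: Suc_le_eq intro!: gr0I)
    show "{1..<n} \<subseteq> nbrs n E 0" using dom unfolding nbrs_def by auto
  qed
  have row: "real n * f a \<le> Re ((Q_matrix n E *\<^sub>v v) $ a)" if a: "a < n" for a
  proof -
    have eq: "Re ((Q_matrix n E *\<^sub>v v) $ a) = deg n E a * f a + (\<Sum>j\<in>nbrs n E a. f j)"
      using a by (simp add: Q_matrix_mult_vec[OF v a] Re_sum vi nbrs_def)
    show ?thesis
    proof (cases "a = 0")
      case True
      have "deg n E a = n - 1" "(\<Sum>j\<in>nbrs n E a. f j) = real (n - 1)"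
        unfolding True deg_eq_card_nbrs nbrs0 f_def by simp_all
      then show ?thesis unfolding eq using True n by (simp add: f_def of_nat_diff algebra_simps)
    next
      case False
      have in0: "0 \<in> nbrs n E a" using dom sg a False unfolding nbrs_def simple_graph_def by auto
      then have "f 0 \<le> (\<Sum>j\<in>nbrs n E a. f j)" by (intro member_le_sum) (auto simp: f0)
      moreover have "1 \<le> deg n E a" using in0 unfolding deg_eq_card_nbrs by (auto simp: Suc_le_eq card_gt_0_iff)
      ultimately show ?thesis unfolding eq using False n by (simp add: f_def of_nat_diff)
    qed
  qed
  have "real n * Re (v \<bullet>c v) = (\<Sum>a<n. real n * f a * f a)"
    using v by (simp add: Re_cscalar_prod_self[OF v] vi sum_distrib_left power2_eq_square mult.assoc)
  also have "\<dots> \<le> (\<Sum>a<n. Re ((Q_matrix n E *\<^sub>v v) $ a) * f a)"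
    by (rule sum_mono, rule mult_right_mono, rule row) (auto simp: f0)
  also have "\<dots> = Re ((Q_matrix n E *\<^sub>v v) \<bullet>c v)"
    using v by (subst cscalar_prod_sum[of _ n]) (auto simp: Re_sum vi)
  finally show thesis using that v v0 by blast
qed

lemma Q_eigenvector_cmod:
  fixes y :: "complex vec"
  assumes y: "y \<in> carrier_vec n" and ev: "Q_matrix n E *\<^sub>v y = complex_of_real \<theta> \<cdot>\<^sub>v y" and i: "i < n"
  shows "(\<theta> - deg n E i) * cmod (y $ i) \<le> (\<Sum>j\<in>nbrs n E i. cmod (y $ j))"
proof -
  have "complex_of_real \<theta> * y $ i = (Q_matrix n E *\<^sub>v y) $ i" using ev i y by simp
  also have "\<dots> = of_nat (deg n E i) * y $ i + (\<Sum>j\<in>nbrs n E i. y $ j)"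
    by (rule Q_matrix_mult_vec[OF y i])
  finally have "complex_of_real \<theta> * y $ i = of_nat (deg n E i) * y $ i + (\<Sum>j\<in>nbrs n E i. y $ j)" .
  then have "complex_of_real (\<theta> - deg n E i) * y $ i = (\<Sum>j\<in>nbrs n E i. y $ j)"
    by (simp add: algebra_simps)
  then have "\<bar>\<theta> - deg n E i\<bar> * cmod (y $ i) = cmod (\<Sum>j\<in>nbrs n E i. y $ j)"
    by (metis norm_mult norm_of_real)
  also have "\<dots> \<le> (\<Sum>j\<in>nbrs n E i. cmod (y $ j))" by (rule norm_sum)
  finally show ?thesis by (smt (verit) abs_ge_self mult_right_mono norm_ge_zero)
qed

lemma sum_le_off_point:
  fixes z :: "nat \<Rightarrow> real" and M :: real
  assumes N: "finite N" and bound: "\<And>j. j \<in> N \<Longrightarrow> j \<noteq> p \<Longrightarrow> z j \<le> M" and M: "0 \<le> M"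
  shows "sum z N \<le> (if p \<in> N then z p else 0) + card N * M"
proof -
  have "sum z (N - {p}) \<le> card (N - {p}) * M" using bound by (intro sum_bounded_above) auto
  also have "\<dots> \<le> card N * M" using N M by (intro mult_right_mono) (auto simp: card_Diff1_le)
  finally have rest: "sum z (N - {p}) \<le> card N * M" .
  show ?thesis
  proof (cases "p \<in> N")
    case True
    then show ?thesis using rest N by (simp add: sum.remove)
  qed (use rest in simp)
qed

text \<open>Let \<open>M = \<bar>y\<^sub>p\<bar>\<close> and \<open>M'\<close> be the largest \<open>\<bar>y\<^sub>i\<bar>\<close> with \<open>i \<noteq> p\<close>. The eigen-equation at a
  maximiser gives \<open>(\<theta> - 12) M' \<le> M\<close>, at \<open>p\<close> it gives \<open>(\<theta> - d\<^sub>p) M \<le> d\<^sub>p M'\<close>; together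
  \<open>(\<theta> - d\<^sub>p) (\<theta> - 12) \<le> d\<^sub>p\<close>, which fails for \<open>\<theta> \<ge> max 24 (d\<^sub>p + 2)\<close>.\<close>

lemma Q_eigenvalue_lt_deg_add_2:
  fixes y :: "complex vec"
  assumes sg: "simple_graph n E" and p: "p < n"
    and small: "\<And>i. i < n \<Longrightarrow> i \<noteq> p \<Longrightarrow> deg n E i \<le> 6"
    and y: "y \<in> carrier_vec n" "y \<noteq> 0\<^sub>v n" and ev: "Q_matrix n E *\<^sub>v y = complex_of_real \<theta> \<cdot>\<^sub>v y"
    and \<theta>: "24 \<le> \<theta>"
  shows "\<theta> < deg n E p + 2"
proof (rule ccontr)
  assume "\<not> \<theta> < deg n E p + 2"
  then have dp: "real (deg n E p) + 2 \<le> \<theta>" by simp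
  define z where "z i = cmod (y $ i)" for i
  define S where "S = {i. i < n \<and> i \<noteq> p}"
  define M where "M = z p"
  \<comment> \<open>the \<open>0\<close> keeps the maximum defined when \<open>S\<close> is empty\<close>
  define M' where "M' = Max (insert 0 (z ` S))"
  have fS: "finite S" unfolding S_def by simp
  have z0: "0 \<le> z i" for i unfolding z_def by simp
  have M'ge: "z i \<le> M'" if "i \<in> S" for i unfolding M'_def using fS that by simp
  have M'0: "0 \<le> M'" unfolding M'_def using fS by simp
  have ineq: "(\<theta> - deg n E i) * z i \<le> (\<Sum>j\<in>nbrs n E i. z j)" if "i < n" for i
    unfolding z_def by (rule Q_eigenvector_cmod[OF y(1) ev that])
  have sum_le: "(\<Sum>j\<in>nbrs n E i. z j) \<le> (if p \<in> nbrs n E i then M else 0) + deg n E i * M'" for i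
    unfolding M_def deg_eq_card_nbrs
    by (rule sum_le_off_point[OF finite_nbrs _ M'0]) (use M'ge in \<open>auto simp: S_def nbrs_def\<close>)
  have others: "(\<theta> - 12) * M' \<le> M"
  proof (cases "M' = 0")
    case False
    then have "M' \<in> z ` S" using Max_in[of "insert 0 (z ` S)"] fS unfolding M'_def by auto
    then obtain i where i: "i \<in> S" "z i = M'" by auto
    then have i': "i < n" "deg n E i \<le> 6" "p \<noteq> i" using small unfolding S_def by auto
    have "(\<theta> - deg n E i) * M' \<le> M + deg n E i * M'"
      using ineq[OF i'(1)] sum_le[of i] i(2) z0[of p] unfolding M_def by (auto split: if_splits)
    moreover have "deg n E i * M' \<le> 6 * M'" using i'(2) M'0 by (intro mult_right_mono) auto
    ultimately show ?thesis by (simp add: algebra_simps)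
  qed (simp add: M_def z0)
  have "p \<notin> nbrs n E p" using nbrs_subset[OF sg, of p] by auto
  then have "(\<Sum>j\<in>nbrs n E p. z j) \<le> deg n E p * M'" using sum_le[of p] by simp
  then have hub: "(\<theta> - deg n E p) * M \<le> deg n E p * M'"
    using ineq[OF p] unfolding M_def by linarith
  show False
  proof (cases "M = 0")
    case True
    then have "M' \<le> 0" using others \<theta> by (simp add: mult_le_0_iff)
    then have "z i = 0" if "i < n" for i
      using that M'ge[of i] z0[of i] True unfolding S_def M_def by (cases "i = p") auto
    then have "y = 0\<^sub>v n" using y(1) unfolding z_def by (intro eq_vecI) auto
    then show False using y(2) by simp
  next
    case False
    then have Mpos: "0 < M" using z0 unfolding M_def by (simp add: less_le)
    have "(\<theta> - deg n E p) * (\<theta> - 12) * M \<le> deg n E p * ((\<theta> - 12) * M')"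
      using mult_right_mono[OF hub, of "\<theta> - 12"] \<theta> by (simp add: algebra_simps)
    also have "\<dots> \<le> deg n E p * M" using others by (intro mult_left_mono) auto
    finally have le: "(\<theta> - deg n E p) * (\<theta> - 12) \<le> deg n E p" using Mpos by simp
    have "2 * (\<theta> - 12) \<le> (\<theta> - deg n E p) * (\<theta> - 12)"
      using dp \<theta> by (intro mult_right_mono) auto
    then have "2 * (\<theta> - 12) \<le> deg n E p" using le by (rule order_trans)
    then show False using dp \<theta> by simp
  qed
qed

section \<open>Graphs with few Q-eigenvalues above 5\<close>

lemma deg_le_6_if_Q_spectrum:
  assumes sg: "simple_graph n E" and card: "size {#z \<in># Q_spectrum n E. 5 < Re z#} \<le> 1"
    and uw: "u < n" "w < n" "u \<noteq> w"
  shows "deg n E u \<le> 6 \<or> deg n E w \<le> 6"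
proof (rule ccontr)
  assume "\<not> ?thesis"
  then have du: "7 \<le> deg n E u" and dw: "7 \<le> deg n E w" by auto
  obtain \<alpha> \<beta> where ab: "\<alpha> \<noteq> 0 \<or> \<beta> \<noteq> 0"
    and le: "Re ((Q_matrix n E *\<^sub>v (\<alpha> \<cdot>\<^sub>v unit_vec n u + \<beta> \<cdot>\<^sub>v unit_vec n w))
        \<bullet>c (\<alpha> \<cdot>\<^sub>v unit_vec n u + \<beta> \<cdot>\<^sub>v unit_vec n w))
      \<le> 5 * Re ((\<alpha> \<cdot>\<^sub>v unit_vec n u + \<beta> \<cdot>\<^sub>v unit_vec n w) \<bullet>c (\<alpha> \<cdot>\<^sub>v unit_vec n u + \<beta> \<cdot>\<^sub>v unit_vec n w))"
    using exists_rayleigh_le_in_plane[OF Q_matrix_carrier hermitian_Q_matrix[OF sg]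
        card[unfolded Q_spectrum_def] unit_vec_carrier unit_vec_carrier] .
  define x where "x = \<alpha> \<cdot>\<^sub>v unit_vec n u + \<beta> \<cdot>\<^sub>v unit_vec n w"
  have x: "x \<in> carrier_vec n" unfolding x_def by simp
  have "x \<noteq> 0\<^sub>v n"
  proof
    assume "x = 0\<^sub>v n"
    then have "x $ u = 0" "x $ w = 0" using uw by auto
    then show False using ab uw unfolding x_def by simp
  qed
  then have "0 < Re (x \<bullet>c x)" by (rule Re_cscalar_prod_self_pos[OF x])
  moreover have "(real 7 - 1) * Re (x \<bullet>c x) \<le> Re ((Q_matrix n E *\<^sub>v x) \<bullet>c x)"
    unfolding x_def by (rule Re_Q_form_pair_ge[OF sg uw du dw])
  ultimately show False using le unfolding x_def by simp
qed

lemma max_deg_eq_if_Q_spectrum: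
  assumes sg: "simple_graph n E" and n: "24 \<le> n"
    and card: "size {#z \<in># Q_spectrum n E. 5 < Re z#} \<le> 1"
    and \<theta>: "complex_of_real \<theta> \<in># Q_spectrum n E" "real n \<le> \<theta>"
  shows "max_deg n E = n - 1"
proof -
  have fin: "finite (deg n E ` {..<n})" by simp
  have "deg n E ` {..<n} \<noteq> {}" using n by (auto simp: lessThan_empty_iff)
  then have "Max (deg n E ` {..<n}) \<in> deg n E ` {..<n}" by (rule Max_in[OF fin])
  then obtain p where pMax: "Max (deg n E ` {..<n}) = deg n E p" and "p \<in> {..<n}" by (rule imageE)
  then have p: "p < n" by simp
  have pmax: "deg n E i \<le> deg n E p" if "i < n" for i using fin that unfolding pMax[symmetric] by simp
  have small: "deg n E i \<le> 6" if "i < n" "i \<noteq> p" for i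
    using deg_le_6_if_Q_spectrum[OF sg card that(1) p that(2)] pmax[OF that(1)] by linarith
  obtain y where y: "y \<in> carrier_vec n" "y \<noteq> 0\<^sub>v n" "Q_matrix n E *\<^sub>v y = complex_of_real \<theta> \<cdot>\<^sub>v y"
    using eigenvector_of_proots_char_poly[OF Q_matrix_carrier \<theta>(1)[unfolded Q_spectrum_def]] .
  have "24 \<le> \<theta>" using order_trans[OF _ \<theta>(2), of 24] n by simp
  then have "\<theta> < deg n E p + 2" using Q_eigenvalue_lt_deg_add_2[OF sg p small y] by blast
  then have "real n < real (deg n E p + 2)" using le_less_trans[OF \<theta>(2)] by simp
  then have "n - 1 \<le> deg n E p" by (simp only: of_nat_less_iff)
  then have "deg n E p = n - 1" using deg_le[OF sg p] by simp
  then show ?thesis by (rule max_deg_eqI[OF sg p])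
qed

lemma cone_Q_form_le_5:
  fixes x :: "complex vec"
  assumes sg: "simple_graph n E" and cone: "\<And>a. 0 < a \<Longrightarrow> a < n \<Longrightarrow> E a 0 \<and> deg n E a \<le> 3"
    and x: "x \<in> carrier_vec n" and x0: "x $ 0 = 0"
  shows "Re ((Q_matrix n E *\<^sub>v x) \<bullet>c x) \<le> 5 * Re (x \<bullet>c x)"
proof -
  have "Re ((Q_matrix n E *\<^sub>v x) \<bullet>c x)
      \<le> (\<Sum>a<n. real (deg n E a + card {b \<in> nbrs n E a. x $ b \<noteq> 0}) * (cmod (x $ a))\<^sup>2)"
    by (rule Re_Q_form_le[OF sg x])
  also have "\<dots> \<le> (\<Sum>a<n. 5 * (cmod (x $ a))\<^sup>2)"
  proof (rule sum_mono)
    fix a assume a: "a \<in> {..<n}"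
    show "real (deg n E a + card {b \<in> nbrs n E a. x $ b \<noteq> 0}) * (cmod (x $ a))\<^sup>2 \<le> 5 * (cmod (x $ a))\<^sup>2"
    proof (cases "a = 0")
      case False
      then have "E a 0" and d3: "deg n E a \<le> 3" using cone a by auto
      then have "0 \<in> nbrs n E a" using a unfolding nbrs_def by auto
      then have "card {b \<in> nbrs n E a. x $ b \<noteq> 0} \<le> card (nbrs n E a - {0})"
        using x0 by (intro card_mono) auto
      also have "\<dots> = deg n E a - 1" using \<open>0 \<in> nbrs n E a\<close> by (simp add: deg_eq_card_nbrs)
      finally have "deg n E a + card {b \<in> nbrs n E a. x $ b \<noteq> 0} \<le> 5" using d3 by linarith
      then show ?thesis by (intro mult_right_mono) auto
    qed (simp add: x0)
  qed
  also have "\<dots> = 5 * Re (x \<bullet>c x)" by (simp add: Re_cscalar_prod_self[OF x] sum_distrib_left)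
  finally show ?thesis .
qed

lemma cone_Q_spectrum_gt_5:
  assumes sg: "simple_graph n E" and cone: "\<And>a. 0 < a \<Longrightarrow> a < n \<Longrightarrow> E a 0 \<and> deg n E a \<le> 3"
  shows "size {#z \<in># Q_spectrum n E. 5 < Re z#} \<le> 1"
  unfolding Q_spectrum_def
  by (rule card_eigenvalues_gt_le_1[OF Q_matrix_carrier hermitian_Q_matrix[OF sg]])
    (rule cone_Q_form_le_5[OF sg cone])

lemma cone_Q_spectrum_ge_order:
  assumes sg: "simple_graph n E" and n: "2 \<le> n" and dom: "\<And>a. 0 < a \<Longrightarrow> a < n \<Longrightarrow> E 0 a"
  obtains \<theta> where "complex_of_real \<theta> \<in># Q_spectrum n E" "real n \<le> \<theta>"
proof -
  obtain v where v: "v \<in> carrier_vec n" "v \<noteq> 0\<^sub>v n"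
    and nv: "real n * Re (v \<bullet>c v) \<le> Re ((Q_matrix n E *\<^sub>v v) \<bullet>c v)"
    using dominating_vertex_rayleigh[OF sg n dom] .
  obtain \<theta> where \<theta>: "complex_of_real \<theta> \<in># proots (char_poly (Q_matrix n E))"
    and v\<theta>: "Re ((Q_matrix n E *\<^sub>v v) \<bullet>c v) \<le> \<theta> * Re (v \<bullet>c v)"
    using exists_eigenvalue_ge_rayleigh[OF Q_matrix_carrier hermitian_Q_matrix[OF sg] v] .
  have "real n * Re (v \<bullet>c v) \<le> \<theta> * Re (v \<bullet>c v)" using nv v\<theta> by linarith
  then have "real n \<le> \<theta>" using Re_cscalar_prod_self_pos[OF v] by simp
  then show thesis using that \<theta> unfolding Q_spectrum_def by blast
qed

section \<open>The graph \<open>K\<^sub>1 \<or> (C\<^sub>s\<^sub>1 \<union> \<dots> \<union> C\<^sub>s\<^sub>t \<union> qK\<^sub>2)\<close>\<close>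

lemma G_adj_simple: "simple_graph (G_order s q) (G_adj s q)"
  unfolding simple_graph_def G_adj_def cycles_adj_def matching_adj_def Let_def
  by (intro conjI allI impI; (elim conjE)?; auto)

lemma G_adj_cone: "0 < a \<Longrightarrow> a < G_order s q \<Longrightarrow> G_adj s q 0 a \<and> G_adj s q a 0"
  unfolding G_adj_def by auto

lemma deg_G_adj_0: "deg (G_order s q) (G_adj s q) 0 = G_order s q - 1"
proof -
  have "{j. j < G_order s q \<and> G_adj s q 0 j} = {1..<G_order s q}"
    unfolding G_adj_def by (auto simp: G_order_def)
  then show ?thesis unfolding deg_def by simp
qed

lemma sum_list_take_mono: "a \<le> b \<Longrightarrow> sum_list (take a s) \<le> sum_list (take b (s :: nat list))"
  by (metis le_add_diff_inverse sum_list_append take_add le_add1)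

lemma cycle_block_unique:
  fixes s :: "nat list"
  assumes k: "k < length s" and k': "k' < length s"
    and u: "sum_list (take k s) \<le> u" "u < sum_list (take k s) + s ! k"
    and u': "sum_list (take k' s) \<le> u" "u < sum_list (take k' s) + s ! k'"
  shows "k = k'"
proof (rule ccontr)
  have step: "\<And>i. i < length s \<Longrightarrow> sum_list (take (Suc i) s) = sum_list (take i s) + s ! i"
    by (simp add: take_Suc_conv_app_nth)
  assume "k \<noteq> k'"
  then consider "Suc k \<le> k'" | "Suc k' \<le> k" by linarith
  then show False
  proof cases
    case 1
    then show False using sum_list_take_mono[OF 1, of s] step[OF k] u u' by linarith
  next
    case 2
    then show False using sum_list_take_mono[OF 2, of s] step[OF k'] u u' by linarith
  qed
qed

lemma cycles_adj_lt_sum_list: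
  assumes "cycles_adj s u v"
  shows "u < sum_list s"
proof -
  obtain k where k: "k < length s" "u < sum_list (take k s) + s ! k"
    using assms unfolding cycles_adj_def Let_def by blast
  have "sum_list (take k s) + s ! k = sum_list (take (Suc k) s)"
    using k(1) by (simp add: take_Suc_conv_app_nth)
  also have "\<dots> \<le> sum_list (take (length s) s)" using k(1) by (intro sum_list_take_mono) simp
  finally show ?thesis using k(2) by simp
qed

lemma cycle_pred:
  assumes "b < (c :: nat)" "a = (b + 1) mod c"
  shows "b = (a + c - 1) mod c"
proof (cases "b + 1 < c")
  case True
  then show ?thesis using assms by simp
next
  case False
  then have "b + 1 = c" using assms(1) by simp
  then show ?thesis using assms(2) by simp
qed

lemma cycles_adj_nbrs:
  obtains A where "finite A" "card A \<le> 2" "{v. cycles_adj s u v} \<subseteq> A"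
proof (cases "{v. cycles_adj s u v} = {}")
  case True
  then show thesis by (intro that[of "{}"]) auto
next
  case False
  then obtain v0 where "cycles_adj s u v0" by auto
  then obtain k where k: "k < length s" "sum_list (take k s) \<le> u" "u < sum_list (take k s) + s ! k"
    unfolding cycles_adj_def Let_def by blast
  define off where "off = sum_list (take k s)"
  define c where "c = s ! k"
  define A where "A = {off + (u - off + 1) mod c, off + (u - off + c - 1) mod c}"
  have sub: "{v. cycles_adj s u v} \<subseteq> A"
    unfolding A_def
  proof
    fix v assume "v \<in> {v. cycles_adj s u v}"
    then obtain k' where k': "k' < length s" "sum_list (take k' s) \<le> u" "u < sum_list (take k' s) + s ! k'"
      "sum_list (take k' s) \<le> v" "v < sum_list (take k' s) + s ! k'"
      "v - sum_list (take k' s) = (u - sum_list (take k' s) + 1) mod s ! k' \<or>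
       u - sum_list (take k' s) = (v - sum_list (take k' s) + 1) mod s ! k'"
      unfolding cycles_adj_def Let_def by blast
    have "k' = k" using cycle_block_unique[OF k'(1) k(1) k'(2,3) k(2,3)] .
    then have v: "off \<le> v" "v < off + c"
      and "v - off = (u - off + 1) mod c \<or> u - off = (v - off + 1) mod c"
      using k' unfolding off_def c_def by auto
    then consider (succ) "v - off = (u - off + 1) mod c" | (pred) "u - off = (v - off + 1) mod c"
      by blast
    then show "v \<in> {off + (u - off + 1) mod c, off + (u - off + c - 1) mod c}"
    proof cases
      case pred
      have "v - off = (u - off + c - 1) mod c" by (rule cycle_pred[OF _ pred]) (use v in linarith)
      then show ?thesis using v(1) by auto
    qed (use v(1) in auto)
  qed
  have "finite A" "card A \<le> 2" unfolding A_def by (simp_all add: card_insert_if)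
  then show thesis using sub by (rule that)
qed

lemma matching_adj_unique:
  assumes "matching_adj a q u v" "matching_adj a q u v'"
  shows "v = v'"
proof -
  have partner: "y = z" if "x div 2 = y div 2" "x div 2 = z div 2" "y \<noteq> x" "z \<noteq> x" for x y z :: nat
  proof -
    have "y mod 2 \<noteq> x mod 2" "z mod 2 \<noteq> x mod 2" using that by (metis div_mult_mod_eq)+
    then have "y mod 2 = z mod 2" by (simp add: mod2_eq_if split: if_splits)
    then show "y = z" using that(1,2) by (metis div_mult_mod_eq)
  qed
  have "(u - a) div 2 = (v - a) div 2" "(u - a) div 2 = (v' - a) div 2" "v - a \<noteq> u - a" "v' - a \<noteq> u - a"
    using assms unfolding matching_adj_def by auto
  then have "v - a = v' - a" by (rule partner)
  then show ?thesis using assms unfolding matching_adj_def by auto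
qed

lemma matching_adj_nbrs:
  obtains A where "finite A" "card A \<le> 1" "{v. matching_adj a q u v} \<subseteq> A"
proof (cases "{v. matching_adj a q u v} = {}")
  case True
  then show thesis by (intro that[of "{}"]) auto
next
  case False
  then obtain v0 where "matching_adj a q u v0" by auto
  then have "{v. matching_adj a q u v} \<subseteq> {v0}" using matching_adj_unique by blast
  then show thesis by (intro that[of "{v0}"]) auto
qed

lemma deg_G_adj_le_3:
  assumes i: "0 < i" "i < G_order s q"
  shows "deg (G_order s q) (G_adj s q) i \<le> 3"
proof -
  let ?C = "{v. cycles_adj s (i - 1) v}" and ?M = "{v. matching_adj (sum_list s) q (i - 1) v}"
  have sub: "nbrs (G_order s q) (G_adj s q) i \<subseteq> insert 0 (Suc ` (?C \<union> ?M))"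
  proof
    fix j assume "j \<in> nbrs (G_order s q) (G_adj s q) i"
    then show "j \<in> insert 0 (Suc ` (?C \<union> ?M))"
      using i unfolding nbrs_def G_adj_def by (cases j) auto
  qed
  obtain A where A: "finite A" "card A \<le> 2" "?C \<union> ?M \<subseteq> A"
  proof (cases "?C = {}")
    case True
    obtain A where "finite A" "card A \<le> 1" "?M \<subseteq> A" by (rule matching_adj_nbrs)
    then show thesis using True by (intro that[of A]) auto
  next
    case False
    then have "?M = {}" using cycles_adj_lt_sum_list unfolding matching_adj_def by fastforce
    obtain A where "finite A" "card A \<le> 2" "?C \<subseteq> A" by (rule cycles_adj_nbrs)
    then show thesis using \<open>?M = {}\<close> by (intro that[of A]) auto
  qed
  have "card (nbrs (G_order s q) (G_adj s q) i) \<le> card (insert 0 (Suc ` A))"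
    using sub A(1,3) by (intro card_mono) auto
  also have "\<dots> \<le> Suc (card (Suc ` A))" using A(1) by (simp add: card_insert_if)
  also have "\<dots> \<le> 3" using A(1,2) card_image_le[of A Suc] by simp
  finally show ?thesis unfolding deg_eq_card_nbrs .
qed

theorem lemma5p2:
  fixes s :: "nat list" and q n m :: nat and EH :: "nat \<Rightarrow> nat \<Rightarrow> bool"
  assumes "length s \<ge> 2"
    and "q \<ge> 1"
    and "\<forall>x \<in> set s. x \<ge> 3"
    and "n = G_order s q"
    and "simple_graph m EH"
    and "Q_spectrum m EH = Q_spectrum n (G_adj s q)"
    and "n \<ge> 52 \<or> q \<ge> 12"
  shows "max_deg m EH = max_deg n (G_adj s q) \<and> max_deg n (G_adj s q) = n - 1"
proof -
  note n_def = assms(4)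
  \<comment> \<open>only \<open>n \<ge> 24\<close> is used\<close>
  have n: "24 \<le> n" using assms(4,7) unfolding G_order_def by auto
  have G: "simple_graph n (G_adj s q)" unfolding n_def by (rule G_adj_simple)
  have cone: "\<And>a. 0 < a \<Longrightarrow> a < n \<Longrightarrow> G_adj s q a 0 \<and> deg n (G_adj s q) a \<le> 3"
    unfolding n_def using G_adj_cone deg_G_adj_le_3 by blast
  have dom: "\<And>a. 0 < a \<Longrightarrow> a < n \<Longrightarrow> G_adj s q 0 a"
    unfolding n_def using G_adj_cone by blast
  have "m = n"
    using assms(6) size_proots_char_poly[OF Q_matrix_carrier, of m EH]
      size_proots_char_poly[OF Q_matrix_carrier, of n "G_adj s q"]
    unfolding Q_spectrum_def by metis
  then have H: "simple_graph n EH" and spec: "Q_spectrum n EH = Q_spectrum n (G_adj s q)"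
    using assms(5,6) by simp_all
  obtain \<theta> where "complex_of_real \<theta> \<in># Q_spectrum n (G_adj s q)" "real n \<le> \<theta>"
    using cone_Q_spectrum_ge_order[OF G _ dom] n by auto
  then have "max_deg n EH = n - 1"
    using max_deg_eq_if_Q_spectrum[OF H n] cone_Q_spectrum_gt_5[OF G cone] spec by simp
  moreover have "max_deg n (G_adj s q) = n - 1"
    using max_deg_eqI[OF G _ deg_G_adj_0[of s q, folded n_def]] n by simp
  ultimately show ?thesis using \<open>m = n\<close> by simp
qed

end
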